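(* Let $\kappa\geq\aleph_1$ be a cardinal and let $\Omega$ be a monoid whose underlying set lies in $\mathbf{Set}_\kappa$. Then the category $\mathrm{Trisk}_\Omega(\mathbf{Set}_\kappa)$, with the monoidal product $\oplus$ (unit $\emptyset$) and the trace operation $\mathrm{Tr}$ described below, is a traced monoidal category.
   Context: $\mathbf{Set}_\kappa$ is the category of sets of cardinality less than $\kappa$. A triskell from $S$ to $T$ with weights in a monoid $(\Omega,\cdot,1)$ is a tuple $(E,S,T,\Omega,s,t,w)$ of sets $E,S,T$ and maps $s:E\to S$, $t:E\to T$, $w:E\to\Omega$ (elements of $E$ are called edges). The composite of $(E,S,T,\Omega,s,t,w)$ and $(E',T,T',\Omega,s',t',w')$ is the triskell from $S$ to $T'$ with edge set the pullback $P=\{(e,e')\in E\times E' : t(e)=s'(e')\}$, source $(e,e')\mapsto s(e)$, target $(e,e')\mapsto t'(e')$ and weight $(e,e')\mapsto w(e)\cdot w'(e')$. The category $\mathrm{Trisk}_\Omega(\mathbf{Set}_\kappa)$ has as objects the sets of $\mathbf{Set}_\kappa$ and as morphisms from $S$ to $T$ the triskells from $S$ to $T$ taken up to isomorphism (bijections of edge sets commuting with source, target and weight maps); the identity on $X$ is $(X,X,X,\Omega,\mathrm{id},\mathrm{id},x\mapsto 1)$. The monoidal product $\oplus$ sends triskells $(E,S,T,\Omega,s,t,w)$ and $(E',S',T',\Omega,s',t',w')$ to $(E+E',S+S',T+T',\Omega,s+s',t+t',(w,w'))$ (disjoint unions, with the weight given by $w$ on $E$ and $w'$ on $E'$); its unit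 $\emptyset$ is the empty set (the triskell with empty edge set on empty sets). Trace: given a triskell $T=(E,X+U,Y+U,\Omega,s,t,w)$, $\mathrm{Tr}_U(T)$ is the triskell from $X$ to $Y$ whose edges are the finite sequences $(e_1,\dots,e_k)$, $k\geq1$, of edges of $T$ with $s(e_1)\in X$, $t(e_i)=s(e_{i+1})\in U$ for $1\leq i<k$ and $t(e_k)\in Y$, with source $s(e_1)$, target $t(e_k)$ and weight $w(e_1)\cdot w(e_2)\cdots w(e_k)$ (the triskell of all finite paths from $X$ to $Y$ in $T$). *)

theory Defs
  imports Main
begin

unbundle cardinal_syntax

text \<open>Cardinals are represented, as in the HOL library, by cardinal orders \<open>k :: 'k rel\<close>;
  a set \<open>A\<close> lies in Set_kappa iff \<open>card_of A <o k\<close>.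
  Weights live in a type \<open>'w\<close> of class \<open>monoid_mult\<close> (the monoid Omega, carrier = UNIV).\<close>

record ('e, 'a, 'b, 'w) trisk =
  edges   :: "'e set"
  dom_set :: "'a set"
  cod_set :: "'b set"
  src     :: "'e \<Rightarrow> 'a"
  tgt     :: "'e \<Rightarrow> 'b"
  wt      :: "'e \<Rightarrow> 'w"

text \<open>A triskell is a morphism S -> T of Trisk_Omega(Set_kappa).\<close>
definition thom :: "'k rel \<Rightarrow> ('e, 'a, 'b, 'w) trisk \<Rightarrow> 'a set \<Rightarrow> 'b set \<Rightarrow> bool" where
  "thom k X S T \<longleftrightarrow> dom_set X = S \<and> cod_set X = T \<and>
     src X ` edges X \<subseteq> S \<and> tgt X ` edges X \<subseteq> T \<and>
     card_of (edges X) <o k \<and> card_of S <o k \<and> card_of T <o k"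

text \<open>Isomorphism of triskells (equality of morphisms in Trisk_Omega).\<close>
definition tiso :: "('e, 'a, 'b, 'w) trisk \<Rightarrow> ('f, 'a, 'b, 'w) trisk \<Rightarrow> bool" where
  "tiso X Y \<longleftrightarrow> dom_set X = dom_set Y \<and> cod_set X = cod_set Y \<and>
     (\<exists>f. bij_betw f (edges X) (edges Y) \<and>
          (\<forall>e\<in>edges X. src Y (f e) = src X e \<and> tgt Y (f e) = tgt X e \<and> wt Y (f e) = wt X e))"

text \<open>Composite (diagrammatic order: first X, then Y), via the pullback of edges.\<close>
definition tcomp :: "('e, 'a, 'b, 'w::monoid_mult) trisk \<Rightarrow> ('f, 'b, 'c, 'w) trisk \<Rightarrow> ('e \<times> 'f, 'a, 'c, 'w) trisk" where
  "tcomp X Y = \<lparr> edges = {(e, e'). e \<in> edges X \<and> e' \<in> edges Y \<and> tgt X e = src Y e'},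
                 dom_set = dom_set X, cod_set = cod_set Y,
                 src = (\<lambda>(e, e'). src X e), tgt = (\<lambda>(e, e'). tgt Y e'),
                 wt = (\<lambda>(e, e'). wt X e * wt Y e') \<rparr>"

definition tsum :: "('e, 'a, 'b, 'w) trisk \<Rightarrow> ('f, 'c, 'd, 'w) trisk \<Rightarrow> ('e + 'f, 'a + 'c, 'b + 'd, 'w) trisk" where
  "tsum X Y = \<lparr> edges = edges X <+> edges Y,
                dom_set = dom_set X <+> dom_set Y, cod_set = cod_set X <+> cod_set Y,
                src = map_sum (src X) (src Y), tgt = map_sum (tgt X) (tgt Y),
                wt = case_sum (wt X) (wt Y) \<rparr>"

definition tfun :: "'a set \<Rightarrow> 'b set \<Rightarrow> ('a \<Rightarrow> 'b) \<Rightarrow> ('a, 'a, 'b, 'w::monoid_mult) trisk" where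
  "tfun A B f = \<lparr> edges = A, dom_set = A, cod_set = B, src = id, tgt = f, wt = (\<lambda>_. 1) \<rparr>"

definition tid :: "'a set \<Rightarrow> ('a, 'a, 'a, 'w::monoid_mult) trisk" where
  "tid A = tfun A A id"

definition tassoc :: "'a set \<Rightarrow> 'b set \<Rightarrow> 'c set \<Rightarrow> (('a + 'b) + 'c, ('a + 'b) + 'c, 'a + ('b + 'c), 'w::monoid_mult) trisk" where
  "tassoc A B C = tfun ((A <+> B) <+> C) (A <+> (B <+> C)) (case_sum (case_sum Inl (Inr \<circ> Inl)) (Inr \<circ> Inr))"

definition tassoc_inv :: "'a set \<Rightarrow> 'b set \<Rightarrow> 'c set \<Rightarrow> ('a + ('b + 'c), 'a + ('b + 'c), ('a + 'b) + 'c, 'w::monoid_mult) trisk" where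
  "tassoc_inv A B C = tfun (A <+> (B <+> C)) ((A <+> B) <+> C) (case_sum (Inl \<circ> Inl) (case_sum (Inl \<circ> Inr) Inr))"

definition tlunit :: "'a set \<Rightarrow> ('z + 'a, 'z + 'a, 'a, 'w::monoid_mult) trisk" where
  "tlunit A = tfun ({} <+> A) A projr"

definition tlunit_inv :: "'a set \<Rightarrow> ('a, 'a, 'z + 'a, 'w::monoid_mult) trisk" where
  "tlunit_inv A = tfun A ({} <+> A) Inr"

definition trunit :: "'a set \<Rightarrow> ('a + 'z, 'a + 'z, 'a, 'w::monoid_mult) trisk" where
  "trunit A = tfun (A <+> {}) A projl"

definition trunit_inv :: "'a set \<Rightarrow> ('a, 'a, 'a + 'z, 'w::monoid_mult) trisk" where
  "trunit_inv A = tfun A (A <+> {}) Inl"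

definition tswap :: "'a set \<Rightarrow> 'b set \<Rightarrow> ('a + 'b, 'a + 'b, 'b + 'a, 'w::monoid_mult) trisk" where
  "tswap A B = tfun (A <+> B) (B <+> A) (case_sum Inr Inl)"

text \<open>Trace: all finite nonempty paths from the X-part to the Y-part through U.\<close>
definition ttrace :: "('e, 'a + 'u, 'b + 'u, 'w::monoid_mult) trisk \<Rightarrow> ('e list, 'a, 'b, 'w) trisk" where
  "ttrace X = \<lparr> edges = {es. es \<noteq> [] \<and> set es \<subseteq> edges X \<and> isl (src X (hd es)) \<and>
                         (\<forall>i. Suc i < length es \<longrightarrow>
                              (\<exists>u. tgt X (es ! i) = Inr u \<and> src X (es ! Suc i) = Inr u)) \<and>
                         isl (tgt X (last es))},
                dom_set = {x. Inl x \<in> dom_set X}, cod_set = {y. Inl y \<in> cod_set X},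
                src = (\<lambda>es. projl (src X (hd es))), tgt = (\<lambda>es. projl (tgt X (last es))),
                wt = (\<lambda>es. prod_list (map (wt X) es)) \<rparr>"

end

theory Submission
  imports Defs
begin

text \<open>Morphisms are triskells up to isomorphism, so every law is proved by a bijection between
  edge sets that preserves source, target and weight. For the symmetric monoidal structure these
  bijections only rearrange tuples and sum injections. The edges of a trace are paths, and each trace
  axiom becomes a bijection between sets of paths: naturality attaches the edge of the outer morphism
  to the first or last edge of a path, sliding moves every edge of \<open>G\<close> from the end of one edge
  of \<open>F\<close> to the start of the next, superposing separates the one-edge paths of \<open>G\<close> from the
  paths of \<open>F\<close>, and vanishing cuts a path through \<open>U + V\<close> after every edge that does not end
  in \<open>V\<close>. Paths are finite sequences of edges, so they stay in Set_kappa because kappa is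
  uncountable.\<close>

section \<open>Cardinality bounds\<close>

lemma infinite_Field_if_natLeq_ordLess:
  assumes "Card_order k" "natLeq <o k" shows "\<not> finite (Field k)"
proof -
  have "natLeq \<le>o |Field k|"
    using ordLess_imp_ordLeq[OF assms(2)] card_of_Field_ordIso[OF assms(1)]
    by (blast intro: ordLeq_ordIso_trans ordIso_symmetric)
  then show ?thesis using infinite_iff_natLeq_ordLeq by blast
qed

lemma card_of_Times_ordLess_infinite_Field:
  assumes inf: "\<not> finite (Field k)" and k: "Card_order k" and A: "|A| <o k" and B: "|B| <o k"
  shows "|A \<times> B| <o k"
proof (cases "finite (A <+> B)")
  case True
  then have "finite (A \<times> B)" by simp
  then show ?thesis
    using finite_ordLess_infinite[OF card_of_Well_order card_order_on_well_order_on[OF k] _ inf, of "A \<times> B"] by (simp add: Field_card_of)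
next
  case False
  have "|A \<times> B| \<le>o |(A <+> B) \<times> B|" by (rule card_of_Times_mono1[OF card_of_Plus1])
  also have "|(A <+> B) \<times> B| \<le>o |(A <+> B) \<times> (A <+> B)|" by (rule card_of_Times_mono2[OF card_of_Plus2])
  also have "|(A <+> B) \<times> (A <+> B)| =o |A <+> B|" using card_of_Times_same_infinite False by blast
  finally have "|A \<times> B| \<le>o |A <+> B|" using ordLeq_ordIso_trans by blast
  then show ?thesis
    using card_of_Plus_ordLess_infinite_Field[OF inf k A B] ordLeq_ordLess_trans by blast
qed

lemma card_of_lists_length_ordLeq_infinite:
  assumes "\<not> finite A" shows "|{xs \<in> lists A. length xs = n}| \<le>o |A|"
proof (induction n)
  case 0
  have "{xs \<in> lists A. length xs = 0} = {[]}" by auto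
  moreover have "A \<noteq> {}" using assms by auto
  ultimately show ?case using card_of_singl_ordLeq by metis
next
  case (Suc n)
  let ?L = "\<lambda>n. {xs \<in> lists A. length xs = n}"
  have "?L (Suc n) \<subseteq> (\<lambda>(x, xs). x # xs) ` (A \<times> ?L n)"
  proof
    fix xs assume "xs \<in> ?L (Suc n)"
    then obtain y ys where "xs = y # ys" "y \<in> A" "ys \<in> ?L n" by (auto simp: length_Suc_conv in_lists_conv_set)
    then show "xs \<in> (\<lambda>(x, xs). x # xs) ` (A \<times> ?L n)" by (auto intro: image_eqI[of _ _ "(y, ys)"])
  qed
  then have "|?L (Suc n)| \<le>o |A \<times> ?L n|"
    by (meson card_of_mono1 card_of_image ordLeq_transitive)
  also have "|A \<times> {xs \<in> lists A. length xs = n}| \<le>o |A \<times> A|"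
    using Suc card_of_Times_mono2 by blast
  also have "|A \<times> A| =o |A|" using card_of_Times_same_infinite assms by blast
  finally show ?case using ordLeq_ordIso_trans by blast
qed

lemma card_of_lists_ordLeq_infinite:
  assumes "\<not> finite A" shows "|lists A| \<le>o |A|"
proof -
  have "lists A = (\<Union>n. {xs \<in> lists A. length xs = n})" by auto
  moreover have "|UNIV :: nat set| \<le>o |A|" using assms infinite_iff_card_of_nat by blast
  ultimately show ?thesis
    using card_of_UNION_ordLeq_infinite[OF assms] card_of_lists_length_ordLeq_infinite[OF assms]
    by (metis (no_types, lifting))
qed

lemma card_of_lists_ordLess:
  assumes k: "Card_order k" "natLeq <o k" and A: "|A| <o k"
  shows "|lists A| <o k"
proof -
  let ?M = "A <+> (UNIV :: nat set)"
  \<comment> \<open>padding with a countable set makes the alphabet infinite without leaving Set_kappa\<close>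
  have "|UNIV :: nat set| <o k" using card_of_nat k(2) ordIso_ordLess_trans by blast
  then have M: "|?M| <o k"
    using card_of_Plus_ordLess_infinite_Field[OF infinite_Field_if_natLeq_ordLess[OF k] k(1) A] by blast
  have "inj_on (map Inl) (lists A) \<and> map Inl ` lists A \<subseteq> lists ?M"
    by (auto simp: inj_on_def)
  then have "|lists A| \<le>o |lists ?M|" using card_of_ordLeq by blast
  also have "|lists ?M| \<le>o |?M|" by (rule card_of_lists_ordLeq_infinite) simp
  finally show ?thesis using M ordLeq_ordLess_trans by blast
qed

lemma successively_has_pred: "successively P (x # xs) \<Longrightarrow> y \<in> set xs \<Longrightarrow> \<exists>z\<in>set (x # xs). P z y"
  by (induction xs arbitrary: x) (auto simp: successively_Cons)

lemma successively_has_succ: "successively P xs \<Longrightarrow> x \<in> set (butlast xs) \<Longrightarrow> \<exists>y. P x y"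
  by (induction xs rule: induct_list012) auto

lemma successively_concat_iff:
  "\<forall>l\<in>set ls. l \<noteq> [] \<Longrightarrow> successively P (concat ls) \<longleftrightarrow>
     (\<forall>l\<in>set ls. successively P l) \<and> successively (\<lambda>l l'. P (last l) (hd l')) ls"
proof (induction ls rule: induct_list012)
  case (3 l l' ls)
  then show ?case by (auto simp: successively_append_iff hd_concat)
qed auto

lemma last_concat: "xss \<noteq> [] \<Longrightarrow> last xss \<noteq> [] \<Longrightarrow> last (concat xss) = last (last xss)"
  by (induction xss) (auto simp: last_append dest: last_in_set)

lemma prod_list_concat: "prod_list (concat xss) = prod_list (map prod_list xss)"
  by (induction xss) auto

lemma successively_mono_butlast:
  "successively P xs \<Longrightarrow> (\<And>x y. x \<in> set (butlast xs) \<Longrightarrow> P x y \<Longrightarrow> R x y) \<Longrightarrow>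
    successively R xs"
  by (induction xs rule: induct_list012) auto

fun cut_after :: "('a \<Rightarrow> bool) \<Rightarrow> 'a list \<Rightarrow> 'a list list" where
  "cut_after Q [] = []"
| "cut_after Q (x # xs) =
     (if Q x then [x] # cut_after Q xs
      else (case cut_after Q xs of [] \<Rightarrow> [[x]] | l # ls \<Rightarrow> (x # l) # ls))"

lemma concat_cut_after [simp]: "concat (cut_after Q xs) = xs"
  by (induction xs) (auto split: list.splits)

lemma cut_after_eq_Nil_iff [simp]: "cut_after Q xs = [] \<longleftrightarrow> xs = []"
  by (metis concat_cut_after concat.simps(1) cut_after.simps(1))

lemma segments_cut_after:
  assumes "xs = [] \<or> Q (last xs)" "l \<in> set (cut_after Q xs)"
  shows "l \<noteq> [] \<and> Q (last l) \<and> (\<forall>x\<in>set (butlast l). \<not> Q x)"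
  using assms
proof (induction xs arbitrary: l)
  case (Cons x xs)
  have IH: "l \<in> set (cut_after Q xs) \<Longrightarrow>
      l \<noteq> [] \<and> Q (last l) \<and> (\<forall>x\<in>set (butlast l). \<not> Q x)" for l
  proof -
    have "xs = [] \<or> Q (last xs)" using Cons.prems(1) by (cases xs) simp_all
    then show "l \<in> set (cut_after Q xs) \<Longrightarrow> ?thesis" using Cons.IH by blast
  qed
  show ?case
  proof (cases "Q x")
    case True
    then show ?thesis using Cons.prems(2) IH by auto
  next
    case False
    then have "xs \<noteq> []" using Cons.prems(1) by auto
    then obtain l0 ls where l0: "cut_after Q xs = l0 # ls" by (cases "cut_after Q xs") auto
    then have "cut_after Q (x # xs) = (x # l0) # ls" using False by simp
    moreover have "l0 \<noteq> [] \<and> Q (last l0) \<and> (\<forall>x\<in>set (butlast l0). \<not> Q x)" using IH[of l0] l0 by simp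
    ultimately show ?thesis using Cons.prems(2) IH l0 False by auto
  qed
qed simp

lemma cut_after_append:
  "l \<noteq> [] \<Longrightarrow> Q (last l) \<Longrightarrow> \<forall>x\<in>set (butlast l). \<not> Q x \<Longrightarrow>
    cut_after Q (l @ ys) = l # cut_after Q ys"
  by (induction l rule: induct_list012) auto

lemma cut_after_concat:
  "\<forall>l\<in>set ls. l \<noteq> [] \<and> Q (last l) \<and> (\<forall>x\<in>set (butlast l). \<not> Q x) \<Longrightarrow>
    cut_after Q (concat ls) = ls"
  by (induction ls) (auto simp: cut_after_append)

lemma thomD:
  assumes "thom k X S T"
  shows "dom_set X = S" "cod_set X = T" "e \<in> edges X \<Longrightarrow> src X e \<in> S" "e \<in> edges X \<Longrightarrow> tgt X e \<in> T"
  using assms by (auto simp: thom_def)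

lemma mem_edges_tcomp:
  "p \<in> edges (tcomp X Y) \<longleftrightarrow> fst p \<in> edges X \<and> snd p \<in> edges Y \<and> tgt X (fst p) = src Y (snd p)"
  by (auto simp: tcomp_def)

lemma tcomp_simps [simp]:
  "src (tcomp X Y) p = src X (fst p)" "tgt (tcomp X Y) p = tgt Y (snd p)"
  "wt (tcomp X Y) = (\<lambda>p. wt X (fst p) * wt Y (snd p))"
  "dom_set (tcomp X Y) = dom_set X" "cod_set (tcomp X Y) = cod_set Y"
  by (simp_all add: tcomp_def split_beta fun_eq_iff)

lemma tsum_simps [simp]:
  "edges (tsum X Y) = edges X <+> edges Y"
  "src (tsum X Y) = map_sum (src X) (src Y)" "tgt (tsum X Y) = map_sum (tgt X) (tgt Y)"
  "wt (tsum X Y) = case_sum (wt X) (wt Y)"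
  "dom_set (tsum X Y) = dom_set X <+> dom_set Y" "cod_set (tsum X Y) = cod_set X <+> cod_set Y"
  by (simp_all add: tsum_def)

lemma tfun_simps [simp]:
  "edges (tfun A B f) = A" "src (tfun A B f) = id" "tgt (tfun A B f) = f" "wt (tfun A B f) = (\<lambda>_. 1)"
  "dom_set (tfun A B f) = A" "cod_set (tfun A B f) = B"
  by (simp_all add: tfun_def)

lemma tid_simps [simp]:
  "edges (tid A) = A" "src (tid A) = id" "tgt (tid A) = id" "wt (tid A) = (\<lambda>_. 1)"
  "dom_set (tid A) = A" "cod_set (tid A) = A"
  by (simp_all add: tid_def)

definition tiso_by ::
    "('e \<Rightarrow> 'f) \<Rightarrow> ('f \<Rightarrow> 'e) \<Rightarrow> ('e, 'a, 'b, 'w) trisk \<Rightarrow> ('f, 'a, 'b, 'w) trisk \<Rightarrow> bool" where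
  "tiso_by g h X Y \<longleftrightarrow> dom_set X = dom_set Y \<and> cod_set X = cod_set Y \<and>
     (\<forall>e\<in>edges X. g e \<in> edges Y \<and> h (g e) = e \<and>
        src Y (g e) = src X e \<and> tgt Y (g e) = tgt X e \<and> wt Y (g e) = wt X e) \<and>
     (\<forall>e\<in>edges Y. h e \<in> edges X \<and> g (h e) = e)"

lemma tiso_iff_tiso_by: "tiso X Y \<longleftrightarrow> (\<exists>g h. tiso_by g h X Y)"
proof
  assume "tiso X Y"
  then obtain g where "dom_set X = dom_set Y" "cod_set X = cod_set Y" "bij_betw g (edges X) (edges Y)"
    "\<forall>e\<in>edges X. src Y (g e) = src X e \<and> tgt Y (g e) = tgt X e \<and> wt Y (g e) = wt X e"
    unfolding tiso_def by blast
  then have "tiso_by g (inv_into (edges X) g) X Y"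
    by (auto simp: tiso_by_def bij_betw_def inv_into_into bij_betw_inv_into_right)
  then show "\<exists>g h. tiso_by g h X Y" by blast
next
  assume "\<exists>g h. tiso_by g h X Y"
  then show "tiso X Y"
    unfolding tiso_def tiso_by_def by (blast intro: bij_betw_byWitness)
qed

lemma tisoI:
  assumes "dom_set X = dom_set Y" "cod_set X = cod_set Y"
    and "\<And>e. e \<in> edges X \<Longrightarrow> g e \<in> edges Y" "\<And>e. e \<in> edges Y \<Longrightarrow> h e \<in> edges X"
    and "\<And>e. e \<in> edges X \<Longrightarrow> h (g e) = e" "\<And>e. e \<in> edges Y \<Longrightarrow> g (h e) = e"
    and "\<And>e. e \<in> edges X \<Longrightarrow> src Y (g e) = src X e" "\<And>e. e \<in> edges X \<Longrightarrow> tgt Y (g e) = tgt X e"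
    and "\<And>e. e \<in> edges X \<Longrightarrow> wt Y (g e) = wt X e"
  shows "tiso X Y"
  unfolding tiso_iff_tiso_by tiso_by_def using assms by blast

lemma tiso_imageI:
  assumes "dom_set X = dom_set Y" "cod_set X = cod_set Y"
    and "inj_on m (edges X)" "edges Y = m ` edges X"
    and "\<And>e. e \<in> edges X \<Longrightarrow> src Y (m e) = src X e \<and> tgt Y (m e) = tgt X e \<and> wt Y (m e) = wt X e"
  shows "tiso X Y"
  unfolding tiso_def using assms by (auto simp: bij_betw_def)

lemma tiso_refl: "tiso X X"
  by (rule tisoI[of _ _ id id]) auto

lemma tiso_sym: "tiso X Y \<Longrightarrow> tiso Y X"
  unfolding tiso_iff_tiso_by tiso_by_def by metis

lemma tiso_trans [trans]: assumes "tiso X Y" "tiso Y Z" shows "tiso X Z"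
proof -
  obtain g h g' h' where "tiso_by g h X Y" "tiso_by g' h' Y Z"
    using assms tiso_iff_tiso_by by metis
  then have "tiso_by (g' \<circ> g) (h \<circ> h') X Z"
    unfolding tiso_by_def by auto
  then show ?thesis using tiso_iff_tiso_by by blast
qed

lemma tcomp_cong: assumes "tiso X X'" "tiso Y Y'" shows "tiso (tcomp X Y) (tcomp X' Y')"
proof -
  obtain g h g' h' where "tiso_by g h X X'" "tiso_by g' h' Y Y'"
    using assms tiso_iff_tiso_by by metis
  then have "tiso_by (map_prod g g') (map_prod h h') (tcomp X Y) (tcomp X' Y')"
    unfolding tiso_by_def by (auto simp: tcomp_def) metis+
  then show ?thesis using tiso_iff_tiso_by by blast
qed

lemma tsum_cong: assumes "tiso X X'" "tiso Y Y'" shows "tiso (tsum X Y) (tsum X' Y')"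
proof -
  obtain g h g' h' where "tiso_by g h X X'" "tiso_by g' h' Y Y'"
    using assms tiso_iff_tiso_by by metis
  then have "tiso_by (map_sum g g') (map_sum h h') (tsum X Y) (tsum X' Y')"
    unfolding tiso_by_def by auto
  then show ?thesis using tiso_iff_tiso_by by blast
qed

lemma thom_tfun: "|A| <o k \<Longrightarrow> |B| <o k \<Longrightarrow> f ` A \<subseteq> B \<Longrightarrow> thom k (tfun A B f) A B"
  by (simp add: thom_def)

lemma tfun_cong: "(\<And>a. a \<in> A \<Longrightarrow> f a = g a) \<Longrightarrow> tiso (tfun A B f) (tfun A B g)"
  by (rule tisoI[of _ _ id id]) auto

lemma tcomp_tfun:
  assumes "f ` A \<subseteq> B" "\<And>a. a \<in> A \<Longrightarrow> g (f a) = h a"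
  shows "tiso (tcomp (tfun A B f) (tfun B C g)) (tfun A C h)"
  by (rule tisoI[of _ _ fst "\<lambda>a. (a, f a)"]) (use assms in \<open>auto simp: mem_edges_tcomp\<close>)

lemma tcomp3_tfun:
  assumes "f ` A \<subseteq> B" "g ` B \<subseteq> C" "\<And>a. a \<in> A \<Longrightarrow> h (g (f a)) = l a"
  shows "tiso (tcomp (tcomp (tfun A B f) (tfun B C g)) (tfun C D h)) (tfun A D l)"
proof -
  have "tiso (tcomp (tcomp (tfun A B f) (tfun B C g)) (tfun C D h)) (tcomp (tfun A C (g \<circ> f)) (tfun C D h))"
    using assms(1) by (intro tcomp_cong tcomp_tfun tiso_refl) auto
  also have "tiso \<dots> (tfun A D l)"
    using assms by (intro tcomp_tfun) auto
  finally show ?thesis .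
qed

lemma tsum_tfun: "tsum (tfun A B f) (tfun C D g) = tfun (A <+> C) (B <+> D) (map_sum f g)"
  by (simp add: tsum_def tfun_def map_sum.id sum.case_eq_if)

section \<open>The symmetric monoidal structure\<close>

lemma thom_tid: "|S| <o k \<Longrightarrow> thom k (tid S) S S"
  unfolding tid_def by (rule thom_tfun) auto

lemma thom_tcomp:
  assumes inf: "\<not> finite (Field k)" "Card_order k" and X: "thom k X S T" and Y: "thom k Y T U"
  shows "thom k (tcomp X Y) S U"
proof -
  have "edges (tcomp X Y) \<subseteq> edges X \<times> edges Y" by (auto simp: tcomp_def)
  moreover have "|edges X \<times> edges Y| <o k"
    using X Y by (intro card_of_Times_ordLess_infinite_Field[OF inf]) (simp_all add: thom_def)
  ultimately have "|edges (tcomp X Y)| <o k" using card_of_mono1 ordLeq_ordLess_trans by blast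
  then show ?thesis using X Y by (auto simp: thom_def tcomp_def)
qed

lemma tcomp_tid_left: assumes "thom k X S T" shows "tiso (tcomp (tid S) X) X"
  by (rule tisoI[of _ _ snd "\<lambda>e. (src X e, e)"])
     (auto simp: tid_def mem_edges_tcomp thomD[OF assms])

lemma tcomp_tid_right: assumes "thom k X S T" shows "tiso (tcomp X (tid T)) X"
  by (rule tisoI[of _ _ fst "\<lambda>e. (e, tgt X e)"])
     (auto simp: tid_def mem_edges_tcomp thomD[OF assms])

lemma tcomp_assoc: "tiso (tcomp (tcomp X Y) Z) (tcomp X (tcomp Y Z))"
  by (rule tisoI[of _ _ "\<lambda>((a, b), c). (a, (b, c))" "\<lambda>(a, (b, c)). ((a, b), c)"])
     (auto simp: tcomp_def mult.assoc)

lemma thom_tsum: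
  assumes inf: "\<not> finite (Field k)" "Card_order k" and X: "thom k X S T" and Y: "thom k Y S' T'"
  shows "thom k (tsum X Y) (S <+> S') (T <+> T')"
  using X Y unfolding thom_def by (auto intro: card_of_Plus_ordLess_infinite_Field[OF inf])

lemma tsum_tcomp_interchange:
  "tiso (tcomp (tsum X Y) (tsum X' Y')) (tsum (tcomp X X') (tcomp Y Y'))"
  by (rule tisoI[of _ _ "\<lambda>(a, b). map_sum (\<lambda>e. (e, projl b)) (\<lambda>e. (e, projr b)) a"
        "case_sum (\<lambda>(e, e'). (Inl e, Inl e')) (\<lambda>(e, e'). (Inr e, Inr e'))"])
     (auto simp: tcomp_def split: sum.splits)

lemma tsum_tid: "tiso (tsum (tid S) (tid S')) (tid (S <+> S'))"
  unfolding tid_def tsum_tfun by (rule tfun_cong) (auto split: sum.splits)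

lemma tassoc_isomorphism:
  assumes inf: "\<not> finite (Field k)" "Card_order k" and "|A| <o k" "|B| <o k" "|C| <o k"
  shows "thom k (tassoc A B C) ((A <+> B) <+> C) (A <+> (B <+> C))"
    and "thom k (tassoc_inv A B C) (A <+> (B <+> C)) ((A <+> B) <+> C)"
    and "tiso (tcomp (tassoc A B C) (tassoc_inv A B C)) (tid ((A <+> B) <+> C))"
    and "tiso (tcomp (tassoc_inv A B C) (tassoc A B C)) (tid (A <+> (B <+> C)))"
  unfolding tassoc_def tassoc_inv_def tid_def
  by (intro thom_tfun card_of_Plus_ordLess_infinite_Field[OF inf] assms tcomp_tfun; auto split: sum.splits)+

lemma tunitors_isomorphism:
  assumes A: "|A| <o k"
  shows "thom k (tlunit A) ({} <+> A) A" and "thom k (tlunit_inv A) A ({} <+> A)"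
    and "tiso (tcomp (tlunit A) (tlunit_inv A)) (tid ({} <+> A))"
    and "tiso (tcomp (tlunit_inv A) (tlunit A)) (tid A)"
    and "thom k (trunit A) (A <+> {}) A" and "thom k (trunit_inv A) A (A <+> {})"
    and "tiso (tcomp (trunit A) (trunit_inv A)) (tid (A <+> {}))"
    and "tiso (tcomp (trunit_inv A) (trunit A)) (tid A)"
proof -
  have empty_sum: "|{} <+> A| <o k" "|A <+> {}| <o k"
    using A card_of_Plus_empty1 card_of_Plus_empty2 ordIso_ordLess_trans ordIso_symmetric by blast+
  show "thom k (tlunit A) ({} <+> A) A" "thom k (tlunit_inv A) A ({} <+> A)"
    "thom k (trunit A) (A <+> {}) A" "thom k (trunit_inv A) A (A <+> {})"
    unfolding tlunit_def tlunit_inv_def trunit_def trunit_inv_def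
    by (intro thom_tfun A empty_sum; auto)+
  show "tiso (tcomp (tlunit A) (tlunit_inv A)) (tid ({} <+> A))" "tiso (tcomp (tlunit_inv A) (tlunit A)) (tid A)"
    "tiso (tcomp (trunit A) (trunit_inv A)) (tid (A <+> {}))" "tiso (tcomp (trunit_inv A) (trunit A)) (tid A)"
    unfolding tlunit_def tlunit_inv_def trunit_def trunit_inv_def tid_def
    by (intro tcomp_tfun; auto split: sum.splits)+
qed

lemma tswap_symmetry:
  assumes inf: "\<not> finite (Field k)" "Card_order k" and "|A| <o k" "|B| <o k"
  shows "thom k (tswap A B) (A <+> B) (B <+> A)" and "tiso (tcomp (tswap A B) (tswap B A)) (tid (A <+> B))"
  unfolding tswap_def tid_def
  by (intro thom_tfun card_of_Plus_ordLess_infinite_Field[OF inf] assms tcomp_tfun; auto split: sum.splits)+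

lemma tassoc_pentagon:
  "tiso (tcomp (tassoc (A <+> B) C D) (tassoc A B (C <+> D)))
        (tcomp (tcomp (tsum (tassoc A B C) (tid D)) (tassoc A (B <+> C) D)) (tsum (tid A) (tassoc B C D)))"
  unfolding tassoc_def tid_def tsum_tfun
  by (rule tiso_trans[OF tcomp_tfun tiso_sym[OF tcomp3_tfun]]) (auto split: sum.splits)

lemma tassoc_triangle:
  "tiso (tcomp (tassoc A {} B) (tsum (tid A) (tlunit B))) (tsum (trunit A) (tid B))"
  unfolding tassoc_def tid_def tlunit_def trunit_def tsum_tfun
  by (rule tcomp_tfun) (auto split: sum.splits)

lemma tswap_hexagon:
  "tiso (tcomp (tcomp (tassoc A B C) (tswap A (B <+> C))) (tassoc B C A))
        (tcomp (tcomp (tsum (tswap A B) (tid C)) (tassoc B A C)) (tsum (tid B) (tswap A C)))"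
  unfolding tassoc_def tid_def tswap_def tsum_tfun
  by (rule tiso_trans[OF tcomp3_tfun tiso_sym[OF tcomp3_tfun]]) (auto split: sum.splits)

lemma tassoc_natural:
  assumes X: "thom k X A A'" and Y: "thom k Y B B'" and Z: "thom k Z C C'"
  shows "tiso (tcomp (tsum (tsum X Y) Z) (tassoc A' B' C')) (tcomp (tassoc A B C) (tsum X (tsum Y Z)))"
  by (rule tisoI[of _ _
        "\<lambda>(s, y). (map_sum (map_sum (src X) (src Y)) (src Z) s, case_sum (case_sum Inl (Inr \<circ> Inl)) (Inr \<circ> Inr) s)"
        "\<lambda>(x, s). (case_sum (Inl \<circ> Inl) (case_sum (Inl \<circ> Inr) Inr) s,
                   map_sum (map_sum (tgt X) (tgt Y)) (tgt Z) (case_sum (Inl \<circ> Inl) (case_sum (Inl \<circ> Inr) Inr) s))"])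
     (auto simp: mem_edges_tcomp tassoc_def thomD[OF X] thomD[OF Y] thomD[OF Z] split: sum.splits)

lemma tunitors_natural:
  assumes X: "thom k X A A'"
  shows "tiso (tcomp (tsum (tid {}) X) (tlunit A')) (tcomp (tlunit A) X)"
    and "tiso (tcomp (tsum X (tid {})) (trunit A')) (tcomp (trunit A) X)"
proof -
  show "tiso (tcomp (tsum (tid {}) X) (tlunit A')) (tcomp (tlunit A) X)"
    by (rule tisoI[of _ _ "\<lambda>(s, y). (Inr (src X (projr s)), projr s)" "\<lambda>(x, e). (Inr e, Inr (tgt X e))"])
       (auto simp: mem_edges_tcomp tid_def tlunit_def thomD[OF X])
  show "tiso (tcomp (tsum X (tid {})) (trunit A')) (tcomp (trunit A) X)"
    by (rule tisoI[of _ _ "\<lambda>(s, y). (Inl (src X (projl s)), projl s)" "\<lambda>(x, e). (Inl e, Inl (tgt X e))"])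
       (auto simp: mem_edges_tcomp tid_def trunit_def thomD[OF X])
qed

lemma tswap_natural:
  assumes X: "thom k X A A'" and Y: "thom k Y B B'"
  shows "tiso (tcomp (tsum X Y) (tswap A' B')) (tcomp (tswap A B) (tsum Y X))"
  by (rule tisoI[of _ _ "\<lambda>(s, y). (map_sum (src X) (src Y) s, case_sum Inr Inl s)"
        "\<lambda>(x, s). (case_sum Inr Inl s, map_sum (tgt X) (tgt Y) (case_sum Inr Inl s))"])
     (auto simp: mem_edges_tcomp tswap_def thomD[OF X] thomD[OF Y])

section \<open>Paths and the trace\<close>

definition tlink :: "('e, 'a + 'u, 'b + 'u, 'w) trisk \<Rightarrow> 'e \<Rightarrow> 'e \<Rightarrow> bool" where
  "tlink F e e' \<longleftrightarrow> (\<exists>u. tgt F e = Inr u \<and> src F e' = Inr u)"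

lemma mem_edges_ttrace:
  "es \<in> edges (ttrace F) \<longleftrightarrow> es \<noteq> [] \<and> set es \<subseteq> edges F \<and> isl (src F (hd es)) \<and>
     successively (tlink F) es \<and> isl (tgt F (last es))"
  by (simp add: ttrace_def tlink_def successively_conv_nth)

lemma ttrace_simps [simp]:
  "src (ttrace F) es = projl (src F (hd es))" "tgt (ttrace F) es = projl (tgt F (last es))"
  "wt (ttrace F) = (\<lambda>es. prod_list (map (wt F) es))"
  "dom_set (ttrace F) = {x. Inl x \<in> dom_set F}" "cod_set (ttrace F) = {x. Inl x \<in> cod_set F}"
  by (simp_all add: ttrace_def)

lemma interior_not_isl_if_mem_edges_ttrace:
  assumes "es \<in> edges (ttrace H)"
  shows "x \<in> set (butlast es) \<Longrightarrow> \<not> isl (tgt H x)" "x \<in> set (tl es) \<Longrightarrow> \<not> isl (src H x)"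
proof -
  have succ: "successively (tlink H) es" using assms by (simp add: mem_edges_ttrace)
  show "\<not> isl (tgt H x)" if x: "x \<in> set (butlast es)"
  proof -
    from successively_has_succ[OF succ x] obtain y where "tlink H x y" by blast
    then show ?thesis by (auto simp: tlink_def)
  qed
  show "\<not> isl (src H x)" if x: "x \<in> set (tl es)"
  proof -
    obtain e es' where "es = e # es'" using x by (cases es) auto
    with successively_has_pred[of _ e es' x] succ x obtain y where "tlink H y x" by auto
    then show ?thesis by (auto simp: tlink_def)
  qed
qed

lemma thom_ttrace:
  assumes k: "Card_order k" "natLeq <o k" and F: "thom k F (A <+> U) (B <+> U)"
  shows "thom k (ttrace F) A B"
proof -
  have small: "|edges F| <o k" "|A <+> U| <o k" "|B <+> U| <o k" using F by (simp_all add: thom_def)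
  have "edges (ttrace F) \<subseteq> lists (edges F)" by (auto simp: mem_edges_ttrace)
  then have "|edges (ttrace F)| <o k"
    using card_of_lists_ordLess[OF k small(1)] card_of_mono1 ordLeq_ordLess_trans by blast
  moreover have "|A| <o k" "|B| <o k"
    using small(2,3) card_of_Plus1 ordLeq_ordLess_trans by blast+
  moreover have "src (ttrace F) es \<in> A" "tgt (ttrace F) es \<in> B" if "es \<in> edges (ttrace F)" for es
  proof -
    have "hd es \<in> edges F" "last es \<in> edges F" "isl (src F (hd es))" "isl (tgt F (last es))"
      using that by (auto simp: mem_edges_ttrace)
    then show "src (ttrace F) es \<in> A" "tgt (ttrace F) es \<in> B"
      using thomD(3)[OF F, of "hd es"] thomD(4)[OF F, of "last es"] by (auto simp: isl_def)
  qed
  ultimately show ?thesis using thomD(1,2)[OF F] by (auto simp: thom_def)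
qed

lemma map_mem_edges_ttrace:
  assumes "\<And>e. e \<in> edges F \<Longrightarrow> g e \<in> edges F' \<and> src F' (g e) = src F e \<and> tgt F' (g e) = tgt F e"
    and "es \<in> edges (ttrace F)"
  shows "map g es \<in> edges (ttrace F')"
proof -
  have "set es \<subseteq> edges F" and ne: "es \<noteq> []" using assms(2) by (auto simp: mem_edges_ttrace)
  then have "successively (tlink F') (map g es) \<longleftrightarrow> successively (tlink F) es"
    unfolding successively_map
  proof (intro successively_cong)
    fix x y assume "x \<in> set es" "y \<in> set es"
    then have "x \<in> edges F" "y \<in> edges F" using \<open>set es \<subseteq> edges F\<close> by auto
    then show "tlink F' (g x) (g y) \<longleftrightarrow> tlink F x y" using assms(1) by (simp add: tlink_def)
  qed simp
  moreover have "hd es \<in> edges F" "last es \<in> edges F" using \<open>set es \<subseteq> edges F\<close> ne by auto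
  ultimately show ?thesis
    using assms ne by (auto simp: mem_edges_ttrace hd_map last_map)
qed

lemma ttrace_cong: assumes "tiso F F'" shows "tiso (ttrace F) (ttrace F')"
proof -
  obtain g h where gh: "tiso_by g h F F'" using assms tiso_iff_tiso_by by blast
  then have g: "g e \<in> edges F' \<and> h (g e) = e \<and> src F' (g e) = src F e \<and> tgt F' (g e) = tgt F e \<and>
      wt F' (g e) = wt F e" if "e \<in> edges F" for e
    using that unfolding tiso_by_def by blast
  from gh have h: "h e \<in> edges F \<and> g (h e) = e \<and> src F (h e) = src F' e \<and> tgt F (h e) = tgt F' e"
    if "e \<in> edges F'" for e
    using that unfolding tiso_by_def by metis
  have "tiso_by (map g) (map h) (ttrace F) (ttrace F')"
    unfolding tiso_by_def
  proof (intro conjI ballI)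
    fix es assume es: "es \<in> edges (ttrace F)"
    then have sub: "\<And>e. e \<in> set es \<Longrightarrow> e \<in> edges F" and "es \<noteq> []"
      by (auto simp: mem_edges_ttrace)
    show "map g es \<in> edges (ttrace F')" by (rule map_mem_edges_ttrace[OF _ es]) (use g in blast)
    show "map h (map g es) = es"
      "src (ttrace F') (map g es) = src (ttrace F) es" "tgt (ttrace F') (map g es) = tgt (ttrace F) es"
      "wt (ttrace F') (map g es) = wt (ttrace F) es"
      using sub g \<open>es \<noteq> []\<close>
      by (auto simp: hd_map last_map mem_edges_ttrace intro!: map_idI arg_cong[where f=prod_list])
  next
    fix es assume es: "es \<in> edges (ttrace F')"
    then have "\<And>e. e \<in> set es \<Longrightarrow> e \<in> edges F'" by (auto simp: mem_edges_ttrace)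
    then show "map g (map h es) = es" using h by (auto intro: map_idI)
    show "map h es \<in> edges (ttrace F)" by (rule map_mem_edges_ttrace[OF _ es]) (use h in blast)
  qed (use gh in \<open>auto simp: tiso_by_def\<close>)
  then show ?thesis using tiso_iff_tiso_by by blast
qed

lemma edges_ttrace_tswap: "edges (ttrace (tswap U U :: (_, _, _, 'w::monoid_mult) trisk)) = (\<lambda>u. [Inl u, Inr u]) ` U"
proof (intro set_eqI iffI)
  fix es assume es: "es \<in> edges (ttrace (tswap U U :: (_, _, _, 'w) trisk))"
  then obtain e1 rest where e: "es = e1 # rest" and "e1 \<in> U <+> U" "isl e1"
    by (auto simp: mem_edges_ttrace tswap_def neq_Nil_conv)
  then obtain u where u: "e1 = Inl u" "u \<in> U" by (auto simp: isl_def)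
  have "rest \<noteq> []"
    using es e u by (auto simp: mem_edges_ttrace tswap_def)
  then obtain e2 rest' where r: "rest = e2 # rest'" by (auto simp: neq_Nil_conv)
  have "tlink (tswap U U :: (_, _, _, 'w) trisk) e1 e2" using es e r by (auto simp: mem_edges_ttrace)
  then have e2: "e2 = Inr u" using u by (auto simp: tlink_def tswap_def)
  have "rest' = []"
  proof (rule ccontr)
    assume "rest' \<noteq> []"
    then have "tlink (tswap U U :: (_, _, _, 'w) trisk) e2 (hd rest')" using es e r by (simp add: mem_edges_ttrace successively_Cons)
    then show False using e2 by (simp add: tlink_def tswap_def)
  qed
  then show "es \<in> (\<lambda>u. [Inl u, Inr u]) ` U" using e u r e2 by simp
qed (auto simp: mem_edges_ttrace tswap_def tlink_def)

lemma ttrace_yanking: "tiso (ttrace (tswap U U :: (_, _, _, 'w::monoid_mult) trisk)) (tid U)"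
proof (rule tiso_sym, rule tiso_imageI[where m="\<lambda>u. [Inl u, Inr u]"])
  show "edges (ttrace (tswap U U :: (_, _, _, 'w) trisk)) = (\<lambda>u. [Inl u, Inr u]) ` edges (tid U)"
    by (simp add: edges_ttrace_tswap tid_def)
qed (auto simp: tid_def tswap_def inj_on_def)

lemma edges_ttrace_no_feedback:
  assumes "\<And>e. e \<in> edges F \<Longrightarrow> isl (src F e) \<and> isl (tgt F e)"
  shows "edges (ttrace F) = (\<lambda>e. [e]) ` edges F"
proof (intro set_eqI iffI)
  fix es assume es: "es \<in> edges (ttrace F)"
  then obtain e rest where "es = e # rest" "e \<in> edges F" "successively (tlink F) (e # rest)"
    by (auto simp: mem_edges_ttrace neq_Nil_conv)
  moreover have "\<not> tlink F e e'" for e' using assms[OF \<open>e \<in> edges F\<close>] by (auto simp: tlink_def)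
  ultimately show "es \<in> (\<lambda>e. [e]) ` edges F" by (cases rest) auto
qed (use assms in \<open>auto simp: mem_edges_ttrace\<close>)

lemma ttrace_vanishing_unit:
  assumes F: "thom k F (A <+> {}) (B <+> {})"
  shows "tiso (ttrace F) (tcomp (tcomp (trunit_inv A) F) (trunit B))"
proof (rule tiso_sym, rule tiso_imageI[where m="\<lambda>((a, e), b). [e]"])
  let ?X = "tcomp (tcomp (trunit_inv A) F) (trunit B)"
  have F_Inl: "src F e = Inl (projl (src F e))" "projl (src F e) \<in> A" "tgt F e = Inl (projl (tgt F e))"
    if "e \<in> edges F" for e
    using thomD(3,4)[OF F that] by auto
  then have "edges (ttrace F) = (\<lambda>e. [e]) ` edges F"
    by (intro edges_ttrace_no_feedback) (metis isl_def)
  also have "edges F = (\<lambda>((a, e), b). e) ` edges ?X"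
  proof (intro set_eqI iffI)
    fix e assume e: "e \<in> edges F"
    then have "((projl (src F e), e), tgt F e) \<in> edges ?X"
      using F_Inl[OF e] thomD(4)[OF F e] by (auto simp: mem_edges_tcomp trunit_def trunit_inv_def)
    then show "e \<in> (\<lambda>((a, e), b). e) ` edges ?X" by force
  qed (auto simp: tcomp_def)
  finally show "edges (ttrace F) = (\<lambda>((a, e), b). [e]) ` edges ?X"
    by (simp add: image_image case_prod_beta)
  show "inj_on (\<lambda>((a, e), b). [e]) (edges ?X)"
    by (auto simp: inj_on_def mem_edges_tcomp trunit_def trunit_inv_def) (metis sum.inject(1))
qed (use thomD(1,2)[OF F] in \<open>auto simp: mem_edges_tcomp trunit_def trunit_inv_def\<close>, metis sum.sel(1))

section \<open>Naturality of the trace\<close>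

lemma edges_tcomp_tsum_tid_left:
  "(s, f) \<in> edges (tcomp (tsum G (tid U)) F) \<longleftrightarrow>
     f \<in> edges F \<and> (case s of Inl g \<Rightarrow> g \<in> edges G \<and> src F f = Inl (tgt G g)
                           | Inr u \<Rightarrow> u \<in> U \<and> src F f = Inr u)"
  by (auto simp: mem_edges_tcomp split: sum.splits)

lemma tlink_tcomp_tsum_tid_left:
  assumes "(s', f') \<in> edges (tcomp (tsum G (tid U)) F)"
  shows "tlink (tcomp (tsum G (tid U)) F) (s, f) (s', f') \<longleftrightarrow> tlink F f f' \<and> s' = Inr (projr (src F f'))"
  using assms by (cases s') (auto simp: tlink_def edges_tcomp_tsum_tid_left)

definition lift_path_left :: "('f, 'a + 'u, 'b + 'u, 'w) trisk \<Rightarrow> 'g \<times> 'f list \<Rightarrow> (('g + 'u) \<times> 'f) list" where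
  "lift_path_left F = (\<lambda>(g, es). (Inl g, hd es) # map (\<lambda>f. (Inr (projr (src F f)), f)) (tl es))"

lemma lift_path_left_Cons: "lift_path_left F (g, f # fs) = (Inl g, f) # map (\<lambda>f. (Inr (projr (src F f)), f)) fs"
  by (simp add: lift_path_left_def)

lemma mem_edges_ttrace_tcomp_tsum_tid_left:
  assumes ps: "ps \<in> edges (ttrace (tcomp (tsum G (tid U)) F))"
  shows "\<exists>g. (g, map snd ps) \<in> edges (tcomp G (ttrace F)) \<and> ps = lift_path_left F (g, map snd ps)"
proof -
  let ?L = "tcomp (tsum G (tid U)) F"
  obtain s1 f1 qs where "ps = (s1, f1) # qs" "isl s1"
    using ps by (cases ps) (auto simp: mem_edges_ttrace isl_map_sum)
  then obtain g where ps_eq: "ps = (Inl g, f1) # qs" by (cases s1) auto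
  have "fst q = Inr (projr (src F (snd q)))" if q: "q \<in> set qs" for q
  proof -
    have "\<not> isl (fst q)" using interior_not_isl_if_mem_edges_ttrace(2)[OF ps] q ps_eq by (simp add: isl_map_sum)
    moreover have "q \<in> edges ?L" using ps q ps_eq by (auto simp: mem_edges_ttrace)
    ultimately show ?thesis by (cases q; cases "fst q") (auto simp: edges_tcomp_tsum_tid_left)
  qed
  then have "map ((\<lambda>f. (Inr (projr (src F f)), f)) \<circ> snd) qs = qs"
    by (intro map_idI) (simp add: prod_eq_iff)
  then have lift: "ps = lift_path_left F (g, map snd ps)"
    using ps_eq by (simp add: lift_path_left_Cons)
  have "successively (tlink F) (map snd ps)"
    unfolding successively_map
  proof (rule successively_mono)
    show "successively (tlink ?L) ps" using ps by (simp add: mem_edges_ttrace)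
    fix p q assume "p \<in> set ps" "q \<in> set ps" "tlink ?L p q"
    moreover have "q \<in> edges ?L" using ps \<open>q \<in> set ps\<close> by (auto simp: mem_edges_ttrace)
    ultimately show "tlink F (snd p) (snd q)" by (metis prod.collapse tlink_tcomp_tsum_tid_left)
  qed
  moreover have "g \<in> edges G" "src F f1 = Inl (tgt G g)"
    using ps ps_eq by (auto simp: mem_edges_ttrace edges_tcomp_tsum_tid_left)
  ultimately have "(g, map snd ps) \<in> edges (tcomp G (ttrace F))"
    using ps ps_eq by (auto simp: mem_edges_ttrace mem_edges_tcomp last_map)
  with lift show ?thesis by blast
qed

lemma lift_path_left_mem_edges_ttrace:
  assumes F: "thom k F (A <+> U) (B <+> U)" and e: "(g, es) \<in> edges (tcomp G (ttrace F))"
  shows "lift_path_left F (g, es) \<in> edges (ttrace (tcomp (tsum G (tid U)) F))"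
proof -
  let ?L = "tcomp (tsum G (tid U)) F" and ?ps = "lift_path_left F (g, es)"
  obtain f1 fs where es_eq: "es = f1 # fs" using e by (auto simp: mem_edges_tcomp mem_edges_ttrace neq_Nil_conv)
  have es: "es \<in> edges (ttrace F)" and g: "g \<in> edges G" and f1: "src F f1 = Inl (tgt G g)"
    using e es_eq by (auto simp: mem_edges_tcomp mem_edges_ttrace isl_def)
  have fs: "src F f = Inr (projr (src F f)) \<and> projr (src F f) \<in> U \<and> f \<in> edges F" if f: "f \<in> set fs" for f
  proof -
    have "\<not> isl (src F f)" "f \<in> edges F"
      using interior_not_isl_if_mem_edges_ttrace(2)[OF es] es es_eq f by (auto simp: mem_edges_ttrace)
    then show ?thesis using thomD(3)[OF F, of f] by (cases "src F f") auto
  qed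
  have ps_eq: "?ps = (Inl g, f1) # map (\<lambda>f. (Inr (projr (src F f)), f)) fs" and snd_ps: "map snd ?ps = es"
    by (simp_all add: es_eq lift_path_left_Cons comp_def)
  have sub: "set ?ps \<subseteq> edges ?L"
    using ps_eq fs g f1 es es_eq by (auto simp: edges_tcomp_tsum_tid_left mem_edges_ttrace)
  have "successively (tlink ?L) ?ps"
  proof (rule successively_mono)
    show "successively (\<lambda>x y. tlink F (snd x) (snd y)) ?ps"
      using es snd_ps successively_map[of "tlink F" snd ?ps] by (simp add: mem_edges_ttrace)
    fix x y assume "x \<in> set ?ps" "y \<in> set ?ps" "tlink F (snd x) (snd y)"
    moreover have "y \<noteq> (Inl g, f1)" using \<open>tlink F (snd x) (snd y)\<close> f1 by (auto simp: tlink_def)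
    ultimately have "y \<in> edges ?L" "fst y = Inr (projr (src F (snd y)))" using sub ps_eq by auto
    with \<open>tlink F (snd x) (snd y)\<close> show "tlink ?L x y" by (metis prod.collapse tlink_tcomp_tsum_tid_left)
  qed
  then show ?thesis
    using sub es es_eq ps_eq snd_ps f1 by (auto simp: mem_edges_ttrace last_map split: if_splits)
qed

lemma ttrace_natural_left:
  assumes G: "thom k G A' A" and F: "thom k F (A <+> U) (B <+> U)"
  shows "tiso (ttrace (tcomp (tsum G (tid U)) F)) (tcomp G (ttrace F))"
proof (rule tiso_sym, rule tiso_imageI[where m="lift_path_left F"])
  show "inj_on (lift_path_left F) (edges (tcomp G (ttrace F)))"
    by (auto simp: inj_on_def mem_edges_tcomp mem_edges_ttrace neq_Nil_conv lift_path_left_Cons comp_def)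
  show "edges (ttrace (tcomp (tsum G (tid U)) F)) = lift_path_left F ` edges (tcomp G (ttrace F))"
    using mem_edges_ttrace_tcomp_tsum_tid_left lift_path_left_mem_edges_ttrace[OF F] by fast
  fix e assume "e \<in> edges (tcomp G (ttrace F))"
  then obtain g f fs where "e = (g, f # fs)" by (auto simp: tcomp_def mem_edges_ttrace neq_Nil_conv)
  then show "src (ttrace (tcomp (tsum G (tid U)) F)) (lift_path_left F e) = src (tcomp G (ttrace F)) e \<and>
    tgt (ttrace (tcomp (tsum G (tid U)) F)) (lift_path_left F e) = tgt (tcomp G (ttrace F)) e \<and>
    wt (ttrace (tcomp (tsum G (tid U)) F)) (lift_path_left F e) = wt (tcomp G (ttrace F)) e"
    by (simp add: lift_path_left_Cons last_map comp_def mult.assoc)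
qed (auto simp: thomD[OF G])

lemma edges_tcomp_tsum_tid_right:
  "(f, s) \<in> edges (tcomp F (tsum H (tid U))) \<longleftrightarrow>
     f \<in> edges F \<and> (case s of Inl h \<Rightarrow> h \<in> edges H \<and> tgt F f = Inl (src H h)
                           | Inr u \<Rightarrow> u \<in> U \<and> tgt F f = Inr u)"
  by (auto simp: mem_edges_tcomp split: sum.splits)

lemma tlink_tcomp_tsum_tid_right:
  assumes "(f, s) \<in> edges (tcomp F (tsum H (tid U)))"
  shows "tlink (tcomp F (tsum H (tid U))) (f, s) (f', s') \<longleftrightarrow> tlink F f f' \<and> s = Inr (projr (tgt F f))"
  using assms by (cases s) (auto simp: tlink_def edges_tcomp_tsum_tid_right)

definition lift_path_right :: "('f, 'a + 'u, 'b + 'u, 'w) trisk \<Rightarrow> 'f list \<times> 'h \<Rightarrow> ('f \<times> ('h + 'u)) list" where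
  "lift_path_right F = (\<lambda>(es, h). map (\<lambda>f. (f, Inr (projr (tgt F f)))) (butlast es) @ [(last es, Inl h)])"

lemma lift_path_right_snoc:
  "lift_path_right F (fs @ [f], h) = map (\<lambda>f. (f, Inr (projr (tgt F f)))) fs @ [(f, Inl h)]"
  by (simp add: lift_path_right_def)

lemma mem_edges_ttrace_tcomp_tsum_tid_right:
  assumes ps: "ps \<in> edges (ttrace (tcomp F (tsum H (tid U))))"
  shows "\<exists>h. (map fst ps, h) \<in> edges (tcomp (ttrace F) H) \<and> ps = lift_path_right F (map fst ps, h)"
proof -
  let ?L = "tcomp F (tsum H (tid U))"
  obtain s1 f1 qs where "ps = qs @ [(f1, s1)]" "isl s1"
    using ps by (cases ps rule: rev_cases) (auto simp: mem_edges_ttrace isl_map_sum)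
  then obtain h where ps_eq: "ps = qs @ [(f1, Inl h)]" by (cases s1) auto
  have "snd q = Inr (projr (tgt F (fst q)))" if q: "q \<in> set qs" for q
  proof -
    have "\<not> isl (snd q)" using interior_not_isl_if_mem_edges_ttrace(1)[OF ps] q ps_eq by (simp add: isl_map_sum)
    moreover have "q \<in> edges ?L" using ps q ps_eq by (auto simp: mem_edges_ttrace)
    ultimately show ?thesis by (cases q; cases "snd q") (auto simp: edges_tcomp_tsum_tid_right)
  qed
  then have "map ((\<lambda>f. (f, Inr (projr (tgt F f)))) \<circ> fst) qs = qs"
    by (intro map_idI) (simp add: prod_eq_iff)
  then have lift: "ps = lift_path_right F (map fst ps, h)"
    using ps_eq by (simp add: lift_path_right_snoc)
  have "successively (tlink F) (map fst ps)"
    unfolding successively_map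
  proof (rule successively_mono)
    show "successively (tlink ?L) ps" using ps by (simp add: mem_edges_ttrace)
    fix p q assume "p \<in> set ps" "q \<in> set ps" "tlink ?L p q"
    moreover have "p \<in> edges ?L" using ps \<open>p \<in> set ps\<close> by (auto simp: mem_edges_ttrace)
    ultimately show "tlink F (fst p) (fst q)" by (metis prod.collapse tlink_tcomp_tsum_tid_right)
  qed
  moreover have "h \<in> edges H" "tgt F f1 = Inl (src H h)"
    using ps ps_eq by (auto simp: mem_edges_ttrace edges_tcomp_tsum_tid_right)
  moreover have "hd (map fst ps) = fst (hd ps)" using ps_eq by (intro hd_map) simp
  ultimately have "(map fst ps, h) \<in> edges (tcomp (ttrace F) H)"
    using ps ps_eq by (auto simp: mem_edges_ttrace mem_edges_tcomp)
  with lift show ?thesis by blast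
qed

lemma lift_path_right_mem_edges_ttrace:
  assumes F: "thom k F (A <+> U) (B <+> U)" and e: "(es, h) \<in> edges (tcomp (ttrace F) H)"
  shows "lift_path_right F (es, h) \<in> edges (ttrace (tcomp F (tsum H (tid U))))"
proof -
  let ?L = "tcomp F (tsum H (tid U))" and ?ps = "lift_path_right F (es, h)"
  obtain fs f1 where es_eq: "es = fs @ [f1]"
    using e by (cases es rule: rev_cases) (auto simp: mem_edges_tcomp mem_edges_ttrace)
  have es: "es \<in> edges (ttrace F)" and h: "h \<in> edges H" and f1: "tgt F f1 = Inl (src H h)"
    using e es_eq by (auto simp: mem_edges_tcomp mem_edges_ttrace isl_def)
  have fs: "tgt F f = Inr (projr (tgt F f)) \<and> projr (tgt F f) \<in> U \<and> f \<in> edges F" if f: "f \<in> set fs" for f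
  proof -
    have "\<not> isl (tgt F f)" "f \<in> edges F"
      using interior_not_isl_if_mem_edges_ttrace(1)[OF es] es es_eq f by (auto simp: mem_edges_ttrace)
    then show ?thesis using thomD(4)[OF F, of f] by (cases "tgt F f") auto
  qed
  have ps_eq: "?ps = map (\<lambda>f. (f, Inr (projr (tgt F f)))) fs @ [(f1, Inl h)]" and fst_ps: "map fst ?ps = es"
    by (simp_all add: es_eq lift_path_right_snoc comp_def)
  have sub: "set ?ps \<subseteq> edges ?L"
    using ps_eq fs h f1 es es_eq by (auto simp: edges_tcomp_tsum_tid_right mem_edges_ttrace)
  have "successively (tlink ?L) ?ps"
  proof (rule successively_mono)
    show "successively (\<lambda>x y. tlink F (fst x) (fst y)) ?ps"
      using es fst_ps successively_map[of "tlink F" fst ?ps] by (simp add: mem_edges_ttrace)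
    fix x y assume "x \<in> set ?ps" "y \<in> set ?ps" "tlink F (fst x) (fst y)"
    moreover have "x \<noteq> (f1, Inl h)" using \<open>tlink F (fst x) (fst y)\<close> f1 by (auto simp: tlink_def)
    ultimately have "x \<in> edges ?L" "snd x = Inr (projr (tgt F (fst x)))" using sub ps_eq by auto
    with \<open>tlink F (fst x) (fst y)\<close> show "tlink ?L x y" by (metis prod.collapse tlink_tcomp_tsum_tid_right)
  qed
  then show ?thesis
    using sub es es_eq ps_eq fst_ps f1 by (auto simp: mem_edges_ttrace hd_append hd_map split: if_splits)
qed

lemma ttrace_natural_right:
  assumes F: "thom k F (A <+> U) (B <+> U)" and H: "thom k H B B'"
  shows "tiso (ttrace (tcomp F (tsum H (tid U)))) (tcomp (ttrace F) H)"
proof (rule tiso_sym, rule tiso_imageI[where m="lift_path_right F"])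
  have shape: "\<exists>h f fs. e = (fs @ [f], h)" if "e \<in> edges (tcomp (ttrace F) H)" for e
    using that by (cases e; cases "fst e" rule: rev_cases) (auto simp: tcomp_def mem_edges_ttrace)
  show "inj_on (lift_path_right F) (edges (tcomp (ttrace F) H))"
  proof (rule inj_on_inverseI[where g="\<lambda>ps. (map fst ps, projl (snd (last ps)))"])
    fix e assume "e \<in> edges (tcomp (ttrace F) H)"
    then obtain h f fs where "e = (fs @ [f], h)" using shape by blast
    then show "(map fst (lift_path_right F e), projl (snd (last (lift_path_right F e)))) = e"
      by (simp add: lift_path_right_snoc comp_def)
  qed
  show "edges (ttrace (tcomp F (tsum H (tid U)))) = lift_path_right F ` edges (tcomp (ttrace F) H)"
    using mem_edges_ttrace_tcomp_tsum_tid_right lift_path_right_mem_edges_ttrace[OF F] by fast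
  fix e assume "e \<in> edges (tcomp (ttrace F) H)"
  then obtain h f fs where "e = (fs @ [f], h)" using shape by blast
  then show "src (ttrace (tcomp F (tsum H (tid U)))) (lift_path_right F e) = src (tcomp (ttrace F) H) e \<and>
    tgt (ttrace (tcomp F (tsum H (tid U)))) (lift_path_right F e) = tgt (tcomp (ttrace F) H) e \<and>
    wt (ttrace (tcomp F (tsum H (tid U)))) (lift_path_right F e) = wt (tcomp (ttrace F) H) e"
    by (simp add: lift_path_right_snoc comp_def mult.assoc hd_append hd_map)
qed (auto simp: thomD[OF H])

section \<open>Superposing\<close>

definition trelabel ::
    "('a \<Rightarrow> 'c) \<Rightarrow> ('b \<Rightarrow> 'd) \<Rightarrow> 'c set \<Rightarrow> 'd set \<Rightarrow> ('e, 'a, 'b, 'w) trisk \<Rightarrow> ('e, 'c, 'd, 'w) trisk" where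
  "trelabel \<sigma> \<tau> S T X =
     \<lparr> edges = edges X, dom_set = S, cod_set = T, src = \<sigma> \<circ> src X, tgt = \<tau> \<circ> tgt X, wt = wt X \<rparr>"

lemma trelabel_simps [simp]:
  "edges (trelabel \<sigma> \<tau> S T X) = edges X" "src (trelabel \<sigma> \<tau> S T X) = \<sigma> \<circ> src X"
  "tgt (trelabel \<sigma> \<tau> S T X) = \<tau> \<circ> tgt X" "wt (trelabel \<sigma> \<tau> S T X) = wt X"
  "dom_set (trelabel \<sigma> \<tau> S T X) = S" "cod_set (trelabel \<sigma> \<tau> S T X) = T"
  by (simp_all add: trelabel_def)

lemma tcomp_tfun_trelabel:
  assumes X: "src X ` edges X \<subseteq> S" "tgt X ` edges X \<subseteq> T"
    and \<sigma>: "\<sigma> ` S' \<subseteq> S" "\<sigma>' ` S \<subseteq> S'"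
      "\<And>a. a \<in> S' \<Longrightarrow> \<sigma>' (\<sigma> a) = a" "\<And>s. s \<in> S \<Longrightarrow> \<sigma> (\<sigma>' s) = s"
  shows "tiso (tcomp (tcomp (tfun S' S \<sigma>) X) (tfun T T' \<tau>)) (trelabel \<sigma>' \<tau> S' T' X)"
proof -
  have inv: "\<sigma>' s = a" if "a \<in> S'" "\<sigma> a = s" for a s using \<sigma>(3) that by blast
  have src: "src X e \<in> S" "\<sigma>' (src X e) \<in> S'" if "e \<in> edges X" for e using X(1) \<sigma>(2) that by auto
  show ?thesis
    by (rule tisoI[of _ _ "\<lambda>((a, e), b). e" "\<lambda>e. ((\<sigma>' (src X e), e), tgt X e)"])
       (use X \<sigma> in \<open>auto simp: mem_edges_tcomp inv src\<close>)
qed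

definition reassoc :: "'a + ('b + 'c) \<Rightarrow> ('a + 'b) + 'c" where
  "reassoc = case_sum (Inl \<circ> Inl) (case_sum (Inl \<circ> Inr) Inr)"

lemma reassoc_simps [simp]:
  "reassoc (Inl a) = Inl (Inl a)" "reassoc (Inr (Inl b)) = Inl (Inr b)" "reassoc (Inr (Inr c)) = Inr c"
  by (simp_all add: reassoc_def)

lemma isl_reassoc_Inr [simp]: "isl (reassoc (Inr x)) \<longleftrightarrow> isl x"
  by (cases x) simp_all

lemma isl_reassoc: "isl (reassoc x) \<longleftrightarrow> (\<nexists>v. x = Inr (Inr v))"
  by (auto simp: reassoc_def split: sum.splits)

lemma tassoc_tcomp_tassoc_inv:
  assumes X: "src X ` edges X \<subseteq> A <+> (B <+> C)" "tgt X ` edges X \<subseteq> A' <+> (B' <+> C')"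
  shows "tiso (tcomp (tcomp (tassoc A B C) X) (tassoc_inv A' B' C'))
    (trelabel reassoc reassoc ((A <+> B) <+> C) ((A' <+> B') <+> C') X)"
proof -
  have inv: "tassoc_inv A' B' C' = tfun (A' <+> (B' <+> C')) ((A' <+> B') <+> C') reassoc"
    by (simp add: tassoc_inv_def reassoc_def)
  show ?thesis
    unfolding tassoc_def inv
    by (intro tcomp_tfun_trelabel[OF X]) (auto simp: reassoc_def split: sum.splits)
qed

lemma tlink_trelabel_reassoc_tsum:
  "tlink (trelabel reassoc reassoc S T (tsum G F)) (Inr f) (Inr f') \<longleftrightarrow> tlink F f f'"
  "\<not> tlink (trelabel reassoc reassoc S T (tsum G F)) (Inl g) e"
  "\<not> tlink (trelabel reassoc reassoc S T (tsum G F)) e (Inl g)"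
  unfolding tlink_def by (auto simp: reassoc_def split: sum.splits)

lemma edges_ttrace_trelabel_reassoc_tsum:
  "edges (ttrace (trelabel reassoc reassoc S T (tsum G F)))
     = case_sum (\<lambda>g. [Inl g]) (map Inr) ` (edges G <+> edges (ttrace F))"
proof (intro set_eqI iffI)
  let ?R = "trelabel reassoc reassoc S T (tsum G F)"
  fix es assume es: "es \<in> edges (ttrace ?R)"
  then obtain e1 rest where es_eq: "es = e1 # rest" and succ: "successively (tlink ?R) (e1 # rest)"
    and sub: "set es \<subseteq> edges G <+> edges F"
    by (auto simp: mem_edges_ttrace neq_Nil_conv)
  show "es \<in> case_sum (\<lambda>g. [Inl g]) (map Inr) ` (edges G <+> edges (ttrace F))"
  proof (cases e1)
    case (Inl g)
    then have "rest = []" using succ by (cases rest) (auto simp: tlink_trelabel_reassoc_tsum)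
    then show ?thesis using Inl es_eq sub by force
  next
    case (Inr f)
    have "\<not> isl e" if "e \<in> set es" for e
    proof (cases "e \<in> set rest")
      case True
      then obtain z where "tlink ?R z e" using successively_has_pred[OF succ] by blast
      then show ?thesis by (cases e) (auto simp: tlink_trelabel_reassoc_tsum)
    qed (use that es_eq Inr in auto)
    then obtain fs where es_map: "es = map Inr fs" by (metis map_idI sum.collapse(2) ex_map_conv)
    then have "successively (tlink F) fs"
      using succ es_eq by (simp add: successively_map tlink_trelabel_reassoc_tsum)
    moreover have "fs \<in> lists (edges F)" "fs \<noteq> []" using sub es_map es_eq by auto
    ultimately have "fs \<in> edges (ttrace F)"
      using es es_map by (auto simp: mem_edges_ttrace hd_map last_map)
    then show ?thesis using es_map by force
  qed
next
  fix es assume "es \<in> case_sum (\<lambda>g. [Inl g]) (map Inr) ` (edges G <+> edges (ttrace F))"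
  then show "es \<in> edges (ttrace (trelabel reassoc reassoc S T (tsum G F)))"
    by (auto simp: mem_edges_ttrace successively_map tlink_trelabel_reassoc_tsum hd_map last_map)
qed

lemma ttrace_superposing:
  assumes G: "thom k G W Z" and F: "thom k F (A <+> U) (B <+> U)"
  shows "tiso (ttrace (tcomp (tcomp (tassoc W A U) (tsum G F)) (tassoc_inv Z B U))) (tsum G (ttrace F))"
proof -
  let ?R = "trelabel reassoc reassoc ((W <+> A) <+> U) ((Z <+> B) <+> U) (tsum G F)"
  have "tiso (ttrace (tcomp (tcomp (tassoc W A U) (tsum G F)) (tassoc_inv Z B U))) (ttrace ?R)"
    by (intro ttrace_cong tassoc_tcomp_tassoc_inv) (use thomD[OF G] thomD[OF F] in auto)
  also have "tiso (ttrace ?R) (tsum G (ttrace F))"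
  proof (rule tiso_sym, rule tiso_imageI[where m="case_sum (\<lambda>g. [Inl g]) (map Inr)"])
    show "inj_on (case_sum (\<lambda>g. [Inl g]) (map Inr)) (edges (tsum G (ttrace F)))"
      by (auto simp: inj_on_def mem_edges_ttrace neq_Nil_conv)
    fix e assume "e \<in> edges (tsum G (ttrace F))"
    then show "src (ttrace ?R) (case_sum (\<lambda>g. [Inl g]) (map Inr) e) = src (tsum G (ttrace F)) e \<and>
      tgt (ttrace ?R) (case_sum (\<lambda>g. [Inl g]) (map Inr) e) = tgt (tsum G (ttrace F)) e \<and>
      wt (ttrace ?R) (case_sum (\<lambda>g. [Inl g]) (map Inr) e) = wt (tsum G (ttrace F)) e"
      by (auto simp: mem_edges_ttrace hd_map last_map isl_def comp_def)
  qed (auto simp: edges_ttrace_trelabel_reassoc_tsum thomD[OF G] thomD[OF F])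
  finally show ?thesis .
qed

section \<open>Vanishing\<close>

lemma tlink_trelabel_reassoc:
  "tlink (trelabel reassoc reassoc S T F) e e' \<longleftrightarrow> (\<exists>v. tgt F e = Inr (Inr v) \<and> src F e' = Inr (Inr v))"
  by (auto simp: tlink_def reassoc_def split: sum.splits)

lemma tlink_ttrace_trelabel_reassoc:
  assumes "l \<in> edges (ttrace (trelabel reassoc reassoc S T F))" "l' \<in> edges (ttrace (trelabel reassoc reassoc S T F))"
  shows "tlink (ttrace (trelabel reassoc reassoc S T F)) l l' \<longleftrightarrow> tlink F (last l) (hd l')"
proof -
  have "isl (reassoc (tgt F (last l)))" "isl (reassoc (src F (hd l')))"
    using assms by (simp_all add: mem_edges_ttrace)
  then show ?thesis
    by (auto simp: tlink_def reassoc_def split: sum.splits)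
qed

lemma cut_after_mem_edges_ttrace:
  assumes es: "es \<in> edges (ttrace F)"
  shows "cut_after (\<lambda>e. isl (reassoc (tgt F e))) es \<in> edges (ttrace (ttrace (trelabel reassoc reassoc S T F)))"
proof -
  let ?Q = "\<lambda>e. isl (reassoc (tgt F e))" and ?H = "trelabel reassoc reassoc S T F"
  define ls where "ls = cut_after ?Q es"
  have ne: "es \<noteq> []" and sub: "set es \<subseteq> edges F" and hd: "isl (src F (hd es))"
    and succ: "successively (tlink F) es" and last: "isl (tgt F (last es))"
    using es by (auto simp: mem_edges_ttrace)
  have seg: "l \<noteq> [] \<and> ?Q (last l) \<and> (\<forall>x\<in>set (butlast l). \<not> ?Q x)" if "l \<in> set ls" for l
    using segments_cut_after[of es ?Q l] that last unfolding ls_def by (auto simp: isl_reassoc isl_def)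
  have ls_ne: "ls \<noteq> []" and cc: "concat ls = es" using ne by (simp_all add: ls_def)
  have hh: "hd (hd ls) = hd es" and ll: "last (last ls) = last es"
    using seg ls_ne cc by (auto simp: hd_concat last_concat)
  have sc: "\<forall>l\<in>set ls. successively (tlink F) l" "successively (\<lambda>l l'. tlink F (last l) (hd l')) ls"
    using succ successively_concat_iff[of ls "tlink F"] seg cc by auto
  have "l \<in> edges (ttrace ?H)" if l: "l \<in> set ls" for l
  proof -
    have "isl (reassoc (src F (hd l)))"
    proof (cases "l = hd ls")
      case True then show ?thesis using hh hd by (auto simp: isl_reassoc isl_def)
    next
      case False
      then obtain l1 ls' where "ls = l1 # ls'" "l \<in> set ls'" using ls_ne l by (cases ls) auto
      then obtain z where "z \<in> set ls" "tlink F (last z) (hd l)" using successively_has_pred sc(2) by metis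
      then show ?thesis using seg[of z] by (auto simp: tlink_def isl_reassoc)
    qed
    moreover have "successively (tlink ?H) l"
    proof (rule successively_mono_butlast[of "tlink F"])
      show "successively (tlink F) l" using sc(1) l by blast
      fix x y assume "x \<in> set (butlast l)" "tlink F x y"
      moreover obtain v where "tgt F x = Inr (Inr v)"
        using seg[OF l] \<open>x \<in> set (butlast l)\<close> by (auto simp: isl_reassoc)
      ultimately have "src F y = Inr (Inr v)" by (simp add: tlink_def)
      with \<open>tgt F x = Inr (Inr v)\<close> show "tlink ?H x y" by (auto simp: tlink_trelabel_reassoc)
    qed
    moreover have "set l \<subseteq> edges F" using sub l cc by force
    ultimately show ?thesis using seg[OF l] by (simp add: mem_edges_ttrace)
  qed
  moreover have "successively (tlink (ttrace ?H)) ls"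
    using sc(2) calculation by (auto elim!: successively_mono simp: tlink_ttrace_trelabel_reassoc)
  ultimately show ?thesis
    using hh ll hd last ls_ne unfolding ls_def[symmetric] by (auto simp: mem_edges_ttrace isl_def)
qed

lemma concat_mem_edges_ttrace:
  assumes ls: "ls \<in> edges (ttrace (ttrace (trelabel reassoc reassoc S T F)))"
  shows "concat ls \<in> edges (ttrace F)"
proof -
  let ?H = "trelabel reassoc reassoc S T F"
  have ls_ne: "ls \<noteq> []" and sub: "set ls \<subseteq> edges (ttrace ?H)" and succ: "successively (tlink (ttrace ?H)) ls"
    and hd: "isl (projl (reassoc (src F (hd (hd ls)))))" and last: "isl (projl (reassoc (tgt F (last (last ls)))))"
    using ls by (auto simp: mem_edges_ttrace)
  have ne: "\<forall>l\<in>set ls. l \<noteq> []" using sub by (auto simp: mem_edges_ttrace)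
  have "successively (tlink F) (concat ls)"
    unfolding successively_concat_iff[OF ne]
  proof
    show "\<forall>l\<in>set ls. successively (tlink F) l"
    proof
      fix l assume "l \<in> set ls"
      then have "successively (tlink ?H) l" using sub by (auto simp: mem_edges_ttrace)
      then show "successively (tlink F) l"
        by (rule successively_mono) (unfold tlink_trelabel_reassoc, auto simp: tlink_def)
    qed
    show "successively (\<lambda>l l'. tlink F (last l) (hd l')) ls"
      by (rule successively_mono[OF succ]) (use sub tlink_ttrace_trelabel_reassoc in blast)
  qed
  moreover have "hd ls \<in> edges (ttrace ?H)" "last ls \<in> edges (ttrace ?H)" using sub ls_ne by auto
  then have "isl (reassoc (src F (hd (hd ls))))" "isl (reassoc (tgt F (last (last ls))))"
    by (simp_all add: mem_edges_ttrace)
  moreover have "set (concat ls) \<subseteq> edges F" using sub by (force simp: mem_edges_ttrace)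
  ultimately show ?thesis
    using hd last ls_ne ne
    by (auto simp: mem_edges_ttrace hd_concat last_concat reassoc_def split: sum.splits)
qed

text \<open>The inner trace runs over \<open>V\<close> only, so a path through \<open>U + V\<close> splits into paths of the inner
  trace by cutting after each edge whose target is not in \<open>V\<close>.\<close>

lemma ttrace_ttrace_trelabel_reassoc:
  assumes "dom_set F = A <+> (U <+> V)" "cod_set F = B <+> (U <+> V)"
  shows "tiso (ttrace F) (ttrace (ttrace (trelabel reassoc reassoc ((A <+> U) <+> V) ((B <+> U) <+> V) F)))"
    (is "tiso _ (ttrace (ttrace ?H))")
proof (rule tiso_imageI[where m="cut_after (\<lambda>e. isl (reassoc (tgt F e)))"])
  let ?Q = "\<lambda>e. isl (reassoc (tgt F e))"
  show "inj_on (cut_after ?Q) (edges (ttrace F))"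
    by (rule inj_on_inverseI[where g=concat]) simp
  show "edges (ttrace (ttrace ?H)) = cut_after ?Q ` edges (ttrace F)"
  proof (intro set_eqI iffI)
    fix ls assume ls: "ls \<in> edges (ttrace (ttrace ?H))"
    then have "\<forall>l\<in>set ls. l \<noteq> [] \<and> ?Q (last l) \<and> (\<forall>x\<in>set (butlast l). \<not> ?Q x)"
      using interior_not_isl_if_mem_edges_ttrace(1)[of _ ?H] by (auto simp: mem_edges_ttrace)
    then have "ls = cut_after ?Q (concat ls)" by (simp add: cut_after_concat)
    then show "ls \<in> cut_after ?Q ` edges (ttrace F)" using concat_mem_edges_ttrace[OF ls] by blast
  qed (auto intro: cut_after_mem_edges_ttrace)
  fix es assume es: "es \<in> edges (ttrace F)"
  let ?ls = "cut_after ?Q es"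
  have ne: "\<forall>l\<in>set ?ls. l \<noteq> []" "?ls \<noteq> []"
    using cut_after_mem_edges_ttrace[OF es, of "(A <+> U) <+> V" "(B <+> U) <+> V"] es
    by (auto simp: mem_edges_ttrace)
  then have "hd (hd ?ls) = hd es" "last (last ?ls) = last es"
    using hd_concat[of ?ls] last_concat[of ?ls] by simp_all
  moreover have "isl (src F (hd es))" "isl (tgt F (last es))" using es by (simp_all add: mem_edges_ttrace)
  moreover have "prod_list (map (\<lambda>l. prod_list (map (wt F) l)) ?ls) = prod_list (map (wt F) es)"
    using prod_list_concat[of "map (map (wt F)) ?ls"] by (simp add: map_concat[symmetric] comp_def)
  ultimately show "src (ttrace (ttrace ?H)) ?ls = src (ttrace F) es \<and>
    tgt (ttrace (ttrace ?H)) ?ls = tgt (ttrace F) es \<and> wt (ttrace (ttrace ?H)) ?ls = wt (ttrace F) es"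
    by (auto simp: isl_def comp_def)
qed (use assms in auto)

lemma ttrace_vanishing_tsum:
  assumes F: "thom k F (A <+> (U <+> V)) (B <+> (U <+> V))"
  shows "tiso (ttrace F) (ttrace (ttrace (tcomp (tcomp (tassoc A U V) F) (tassoc_inv B U V))))"
proof -
  have "tiso (ttrace F) (ttrace (ttrace (trelabel reassoc reassoc ((A <+> U) <+> V) ((B <+> U) <+> V) F)))"
    using thomD(1,2)[OF F] by (rule ttrace_ttrace_trelabel_reassoc)
  also have "tiso \<dots> (ttrace (ttrace (tcomp (tcomp (tassoc A U V) F) (tassoc_inv B U V))))"
    using thomD(3,4)[OF F] by (intro ttrace_cong tiso_sym[OF tassoc_tcomp_tassoc_inv]) auto
  finally show ?thesis .
qed

section \<open>Sliding\<close>

text \<open>An edge of \<open>F ; (id_B \<oplus> G)\<close> carries its \<open>G\<close>-edge after the \<open>F\<close>-edge, an edge of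
  \<open>(id_A \<oplus> G) ; F\<close> carries it before; \<open>slide\<close> hands each \<open>G\<close>-edge on to the next edge of the path.\<close>

fun slide :: "'a + 'g \<Rightarrow> ('f \<times> ('b + 'g)) list \<Rightarrow> (('a + 'g) \<times> 'f) list" where
  "slide t [] = []"
| "slide t ((f, s) # ps) = (t, f) # slide (Inr (projr s)) ps"

fun unslide :: "('f \<Rightarrow> 'b + 'v) \<Rightarrow> (('a + 'g) \<times> 'f) list \<Rightarrow> ('f \<times> ('b + 'g)) list" where
  "unslide tf [] = []"
| "unslide tf [(t, f)] = [(f, Inl (projl (tf f)))]"
| "unslide tf ((t, f) # (t', f') # qs) = (f, Inr (projr t')) # unslide tf ((t', f') # qs)"

lemma slide_eq_Nil_iff [simp]: "slide t ps = [] \<longleftrightarrow> ps = []"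
  by (cases ps) auto

lemma hd_slide [simp]: "ps \<noteq> [] \<Longrightarrow> hd (slide t ps) = (t, fst (hd ps))"
  by (cases ps) auto

lemma snd_last_slide [simp]: "ps \<noteq> [] \<Longrightarrow> snd (last (slide t ps)) = fst (last ps)"
  by (induction t ps rule: slide.induct) (auto simp: neq_Nil_conv)

lemma unslide_eq_Nil_iff [simp]: "unslide tf qs = [] \<longleftrightarrow> qs = []"
  by (induction tf qs rule: unslide.induct) auto

lemma fst_hd_unslide [simp]: "qs \<noteq> [] \<Longrightarrow> fst (hd (unslide tf qs)) = snd (hd qs)"
  by (induction tf qs rule: unslide.induct) auto

lemma last_unslide [simp]:
  "qs \<noteq> [] \<Longrightarrow> last (unslide tf qs) = (snd (last qs), Inl (projl (tf (snd (last qs)))))"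
  by (induction tf qs rule: unslide.induct) auto

lemma unslide_slide:
  "ps \<noteq> [] \<Longrightarrow> \<forall>p\<in>set (butlast ps). \<not> isl (snd p) \<Longrightarrow>
    snd (last ps) = Inl (projl (tf (fst (last ps)))) \<Longrightarrow> unslide tf (slide t ps) = ps"
  by (induction ps arbitrary: t rule: induct_list012) (auto simp: neq_Nil_conv)

lemma slide_unslide:
  "qs \<noteq> [] \<Longrightarrow> \<forall>q\<in>set (tl qs). \<not> isl (fst q) \<Longrightarrow> slide (fst (hd qs)) (unslide tf qs) = qs"
  by (induction tf qs rule: unslide.induct) auto

lemma prod_list_slide:
  fixes v :: "'f \<Rightarrow> 'w::monoid_mult"
  assumes "ps \<noteq> []" "\<forall>p\<in>set (butlast ps). \<not> isl (snd p)" "isl (snd (last ps))"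
  shows "case_sum (\<lambda>_. 1) w t * prod_list (map (\<lambda>p. v (fst p) * case_sum (\<lambda>_. 1) w (snd p)) ps)
    = prod_list (map (\<lambda>q. case_sum (\<lambda>_. 1) w (fst q) * v (snd q)) (slide t ps))"
  using assms
proof (induction ps arbitrary: t)
  case (Cons p ps)
  obtain f s where p: "p = (f, s)" by (cases p)
  show ?case
  proof (cases "ps = []")
    case True
    then show ?thesis using Cons.prems p by (auto simp: isl_def)
  next
    case False
    then obtain g where "s = Inr g" using Cons.prems(2) p by (cases s) auto
    then show ?thesis
      using p Cons.IH[of "Inr g"] Cons.prems False by (simp add: mult.assoc)
  qed
qed simp

lemma slide_chain:
  assumes "ps \<noteq> []" "set ps \<subseteq> edges (tcomp F (tsum (tid B) G))"
    "successively (tlink (tcomp F (tsum (tid B) G))) ps" "(t, fst (hd ps)) \<in> edges (tcomp (tsum (tid A) G) F)"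
  shows "set (slide t ps) \<subseteq> edges (tcomp (tsum (tid A) G) F) \<and>
    successively (tlink (tcomp (tsum (tid A) G) F)) (slide t ps)"
  using assms
proof (induction ps arbitrary: t rule: induct_list012)
  case (2 p)
  then show ?case by (cases p) auto
next
  case (3 p q ps)
  obtain f s f' s' where pq: "p = (f, s)" "q = (f', s')" by (cases p, cases q)
  obtain u where u: "map_sum id (tgt G) s = Inr u" "src F f' = Inr u"
    using "3.prems"(3) pq by (auto simp: tlink_def)
  then obtain g where s: "s = Inr g" by (cases s) auto
  have g: "g \<in> edges G" "tgt F f = Inr (src G g)" "src F f' = Inr (tgt G g)"
    using "3.prems"(2) pq s u by (auto simp: mem_edges_tcomp)
  have "set (slide (Inr g) (q # ps)) \<subseteq> edges (tcomp (tsum (tid A) G) F) \<and>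
    successively (tlink (tcomp (tsum (tid A) G) F)) (slide (Inr g) (q # ps))"
    using "3.prems" pq g by (intro "3.IH"(2)) (auto simp: mem_edges_tcomp)
  then show ?case
    using "3.prems"(4) pq s g by (auto simp: successively_Cons tlink_def)
qed simp

lemma unslide_chain:
  assumes "qs \<noteq> []" "set qs \<subseteq> edges (tcomp (tsum (tid A) G) F)"
    "successively (tlink (tcomp (tsum (tid A) G) F)) qs" "isl (tgt F (snd (last qs)))"
    "tgt F ` edges F \<subseteq> B <+> V"
  shows "set (unslide (tgt F) qs) \<subseteq> edges (tcomp F (tsum (tid B) G)) \<and>
    successively (tlink (tcomp F (tsum (tid B) G))) (unslide (tgt F) qs)"
  using assms
proof (induction "tgt F" qs rule: unslide.induct)
  case (2 t f)
  then show ?case by (auto simp: mem_edges_tcomp isl_def)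
next
  case (3 t f t' f' qs)
  obtain u where u: "tgt F f = Inr u" "map_sum id (src G) t' = Inr u"
    using "3.prems"(3) by (auto simp: tlink_def)
  then obtain g where t': "t' = Inr g" by (cases t') auto
  have g: "g \<in> edges G" "tgt F f = Inr (src G g)" "src F f' = Inr (tgt G g)"
    using "3.prems"(2) t' u by (auto simp: mem_edges_tcomp)
  have "set (unslide (tgt F) ((t', f') # qs)) \<subseteq> edges (tcomp F (tsum (tid B) G)) \<and>
    successively (tlink (tcomp F (tsum (tid B) G))) (unslide (tgt F) ((t', f') # qs))"
    using "3.prems" by (intro "3.hyps") (auto simp: successively_Cons)
  moreover obtain s rs where "unslide (tgt F) ((t', f') # qs) = (f', s) # rs"
    using fst_hd_unslide[of "(t', f') # qs" "tgt F"] by (cases "unslide (tgt F) ((t', f') # qs)") auto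
  ultimately show ?case
    using "3.prems"(2) t' g by (auto simp: successively_Cons tlink_def mem_edges_tcomp)
qed simp

lemma mem_edges_ttrace_tcomp_tsum_tidD:
  assumes F: "thom k F (A <+> U) (B <+> U')" and ps: "ps \<in> edges (ttrace (tcomp F (tsum (tid B) G)))"
  shows "(\<forall>p\<in>set (butlast ps). \<not> isl (snd p)) \<and> snd (last ps) = Inl (projl (tgt F (fst (last ps)))) \<and>
    isl (tgt F (fst (last ps))) \<and> (Inl (projl (src F (fst (hd ps)))), fst (hd ps)) \<in> edges (tcomp (tsum (tid A) G) F)"
proof -
  let ?L1 = "tcomp F (tsum (tid B) G)"
  have "hd ps \<in> edges ?L1" "last ps \<in> edges ?L1" using ps by (auto simp: mem_edges_ttrace)
  moreover obtain a where a: "src F (fst (hd ps)) = Inl a" using ps by (auto simp: mem_edges_ttrace isl_def)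
  moreover have "a \<in> A" using thomD(3)[OF F, of "fst (hd ps)"] calculation by (auto simp: mem_edges_tcomp)
  moreover have "isl (snd (last ps))" using ps by (simp add: mem_edges_ttrace isl_map_sum)
  then obtain b where b: "snd (last ps) = Inl b" by (cases "snd (last ps)") auto
  moreover have "tgt F (fst (last ps)) = Inl b" using calculation by (auto simp: mem_edges_tcomp)
  moreover have "\<forall>p\<in>set (butlast ps). \<not> isl (snd p)"
    using interior_not_isl_if_mem_edges_ttrace(1)[OF ps] by (simp add: isl_map_sum)
  ultimately show ?thesis by (auto simp: mem_edges_tcomp)
qed

definition slide_path ::
    "('f, 'a + 'u, 'b + 'v, 'w) trisk \<Rightarrow> ('f \<times> ('b + 'g)) list \<Rightarrow> (('a + 'g) \<times> 'f) list" where
  "slide_path F ps = slide (Inl (projl (src F (fst (hd ps))))) ps"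

lemma slide_path_mem_edges_ttrace:
  assumes F: "thom k F (A <+> U) (B <+> U')" and ps: "ps \<in> edges (ttrace (tcomp F (tsum (tid B) G)))"
  shows "slide_path F ps \<in> edges (ttrace (tcomp (tsum (tid A) G) F))"
proof -
  note path = mem_edges_ttrace_tcomp_tsum_tidD[OF F ps]
  have "set (slide_path F ps) \<subseteq> edges (tcomp (tsum (tid A) G) F) \<and>
    successively (tlink (tcomp (tsum (tid A) G) F)) (slide_path F ps)"
    unfolding slide_path_def using ps path by (intro slide_chain) (auto simp: mem_edges_ttrace)
  then show ?thesis using ps path by (auto simp: mem_edges_ttrace slide_path_def)
qed

lemma unslide_mem_edges_ttrace:
  assumes F: "thom k F (A <+> U) (B <+> U')" and qs: "qs \<in> edges (ttrace (tcomp (tsum (tid A) G) F))"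
  shows "unslide (tgt F) qs \<in> edges (ttrace (tcomp F (tsum (tid B) G))) \<and> slide_path F (unslide (tgt F) qs) = qs"
proof -
  let ?L2 = "tcomp (tsum (tid A) G) F"
  have ne: "qs \<noteq> []" and sub: "set qs \<subseteq> edges ?L2" and succ: "successively (tlink ?L2) qs"
    and hd: "isl (fst (hd qs))" and last: "isl (tgt F (snd (last qs)))"
    using qs by (auto simp: mem_edges_ttrace isl_map_sum)
  then obtain a where a: "fst (hd qs) = Inl a" by (cases "fst (hd qs)") auto
  have "hd qs \<in> edges ?L2" using sub ne by auto
  then have src_hd: "src F (snd (hd qs)) = Inl a" using a by (auto simp: mem_edges_tcomp)
  have "unslide (tgt F) qs \<in> edges (ttrace (tcomp F (tsum (tid B) G)))"
    using unslide_chain[OF ne sub succ last] thomD(4)[OF F] ne src_hd last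
    by (auto simp: mem_edges_ttrace isl_map_sum)
  moreover have "Inl (projl (src F (fst (hd (unslide (tgt F) qs))))) = fst (hd qs)"
    using ne a src_hd by simp
  moreover have "\<forall>q\<in>set (tl qs). \<not> isl (fst q)"
    using interior_not_isl_if_mem_edges_ttrace(2)[OF qs] by (simp add: isl_map_sum)
  ultimately show ?thesis using slide_unslide[OF ne] by (simp add: slide_path_def)
qed

lemma ttrace_dinatural:
  assumes F: "thom k F (A <+> U) (B <+> U')" and G: "thom k G U' U"
  shows "tiso (ttrace (tcomp F (tsum (tid B) G))) (ttrace (tcomp (tsum (tid A) G) F))"
proof (rule tiso_imageI[where m="slide_path F"])
  note path = mem_edges_ttrace_tcomp_tsum_tidD[OF F]
  show "inj_on (slide_path F) (edges (ttrace (tcomp F (tsum (tid B) G))))"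
  proof (rule inj_on_inverseI[where g="unslide (tgt F)"])
    fix ps assume ps: "ps \<in> edges (ttrace (tcomp F (tsum (tid B) G)))"
    then have "ps \<noteq> []" by (simp add: mem_edges_ttrace)
    then show "unslide (tgt F) (slide_path F ps) = ps"
      unfolding slide_path_def by (rule unslide_slide) (use path[OF ps] in auto)
  qed
  show "edges (ttrace (tcomp (tsum (tid A) G) F)) = slide_path F ` edges (ttrace (tcomp F (tsum (tid B) G)))"
  proof (intro set_eqI iffI)
    fix qs assume "qs \<in> edges (ttrace (tcomp (tsum (tid A) G) F))"
    with unslide_mem_edges_ttrace[OF F] show "qs \<in> slide_path F ` edges (ttrace (tcomp F (tsum (tid B) G)))"
      by (intro image_eqI[where x="unslide (tgt F) qs"]) auto
  qed (auto intro: slide_path_mem_edges_ttrace[OF F])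
  fix ps assume ps: "ps \<in> edges (ttrace (tcomp F (tsum (tid B) G)))"
  then have "isl (snd (last ps))" "ps \<noteq> []" by (simp_all add: mem_edges_ttrace isl_map_sum)
  then show "src (ttrace (tcomp (tsum (tid A) G) F)) (slide_path F ps) = src (ttrace (tcomp F (tsum (tid B) G))) ps \<and>
    tgt (ttrace (tcomp (tsum (tid A) G) F)) (slide_path F ps) = tgt (ttrace (tcomp F (tsum (tid B) G))) ps \<and>
    wt (ttrace (tcomp (tsum (tid A) G) F)) (slide_path F ps) = wt (ttrace (tcomp F (tsum (tid B) G))) ps"
    using path[OF ps] prod_list_slide[of ps "wt G" "Inl (projl (src F (fst (hd ps))))" "wt F"]
    by (simp add: slide_path_def last_map)
qed (use thomD(1,2)[OF F] thomD(1,2)[OF G] in auto)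

theorem theorem7:
  fixes k :: "'k rel"
  assumes kappa_card: "Card_order k"
    and kappa_uncountable: "natLeq <o k"
    and Omega_small: "card_of (UNIV :: 'w::monoid_mult set) <o k"
  shows
  \<comment> \<open>category: identities, composition well defined on iso classes, unit and associativity laws\<close>
  "(\<forall>S. card_of S <o k \<longrightarrow> thom k (tid S :: (_, _, _, 'w) trisk) S S)
 \<and> (\<forall>(X :: (_, _, _, 'w) trisk) Y S T U. thom k X S T \<and> thom k Y T U \<longrightarrow> thom k (tcomp X Y) S U)
 \<and> (\<forall>(X :: (_, _, _, 'w) trisk) (X' :: (_, _, _, 'w) trisk) (Y :: (_, _, _, 'w) trisk) (Y' :: (_, _, _, 'w) trisk) S T U.
      thom k X S T \<and> thom k X' S T \<and> thom k Y T U \<and> thom k Y' T U \<and> tiso X X' \<and> tiso Y Y'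
      \<longrightarrow> tiso (tcomp X Y) (tcomp X' Y'))
 \<and> (\<forall>(X :: (_, _, _, 'w) trisk) S T. thom k X S T \<longrightarrow>
      tiso (tcomp (tid S) X) X \<and> tiso (tcomp X (tid T)) X)
 \<and> (\<forall>(X :: (_, _, _, 'w) trisk) Y Z S T U V. thom k X S T \<and> thom k Y T U \<and> thom k Z U V \<longrightarrow>
      tiso (tcomp (tcomp X Y) Z) (tcomp X (tcomp Y Z)))
  \<comment> \<open>monoidal product: bifunctor\<close>
 \<and> (\<forall>(X :: (_, _, _, 'w) trisk) (Y :: (_, _, _, 'w) trisk) S T S' T'. thom k X S T \<and> thom k Y S' T' \<longrightarrow>
      thom k (tsum X Y) (S <+> S') (T <+> T'))
 \<and> (\<forall>(X :: (_, _, _, 'w) trisk) (X' :: (_, _, _, 'w) trisk) (Y :: (_, _, _, 'w) trisk) (Y' :: (_, _, _, 'w) trisk) S T S' T'.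
      thom k X S T \<and> thom k X' S T \<and> thom k Y S' T' \<and> thom k Y' S' T' \<and> tiso X X' \<and> tiso Y Y'
      \<longrightarrow> tiso (tsum X Y) (tsum X' Y'))
 \<and> (\<forall>(X :: (_, _, _, 'w) trisk) (X' :: (_, _, _, 'w) trisk) (Y :: (_, _, _, 'w) trisk) (Y' :: (_, _, _, 'w) trisk) S T U S' T' U'.
      thom k X S T \<and> thom k X' T U \<and> thom k Y S' T' \<and> thom k Y' T' U' \<longrightarrow>
      tiso (tcomp (tsum X Y) (tsum X' Y')) (tsum (tcomp X X') (tcomp Y Y')))
 \<and> (\<forall>S S'. card_of S <o k \<and> card_of S' <o k \<longrightarrow>
      tiso (tsum (tid S) (tid S') :: (_, _, _, 'w) trisk) (tid (S <+> S')))
  \<comment> \<open>structural morphisms are morphisms and isomorphisms (unit object: the empty set)\<close>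
 \<and> (\<forall>A B C. card_of A <o k \<and> card_of B <o k \<and> card_of C <o k \<longrightarrow>
      thom k (tassoc A B C :: (_, _, _, 'w) trisk) ((A <+> B) <+> C) (A <+> (B <+> C))
    \<and> thom k (tassoc_inv A B C :: (_, _, _, 'w) trisk) (A <+> (B <+> C)) ((A <+> B) <+> C)
    \<and> tiso (tcomp (tassoc A B C) (tassoc_inv A B C) :: (_, _, _, 'w) trisk) (tid ((A <+> B) <+> C))
    \<and> tiso (tcomp (tassoc_inv A B C) (tassoc A B C) :: (_, _, _, 'w) trisk) (tid (A <+> (B <+> C))))
 \<and> (\<forall>A. card_of A <o k \<longrightarrow>
      thom k (tlunit A :: (_, _, _, 'w) trisk) ({} <+> A) A
    \<and> thom k (tlunit_inv A :: (_, _, _, 'w) trisk) A ({} <+> A)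
    \<and> tiso (tcomp (tlunit A) (tlunit_inv A) :: (_, _, _, 'w) trisk) (tid ({} <+> A))
    \<and> tiso (tcomp (tlunit_inv A) (tlunit A) :: (_, _, _, 'w) trisk) (tid A)
    \<and> thom k (trunit A :: (_, _, _, 'w) trisk) (A <+> {}) A
    \<and> thom k (trunit_inv A :: (_, _, _, 'w) trisk) A (A <+> {})
    \<and> tiso (tcomp (trunit A) (trunit_inv A) :: (_, _, _, 'w) trisk) (tid (A <+> {}))
    \<and> tiso (tcomp (trunit_inv A) (trunit A) :: (_, _, _, 'w) trisk) (tid A))
  \<comment> \<open>naturality of associator and unitors\<close>
 \<and> (\<forall>(X :: (_, _, _, 'w) trisk) (Y :: (_, _, _, 'w) trisk) (Z :: (_, _, _, 'w) trisk) A A' B B' C C'.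
      thom k X A A' \<and> thom k Y B B' \<and> thom k Z C C' \<longrightarrow>
      tiso (tcomp (tsum (tsum X Y) Z) (tassoc A' B' C')) (tcomp (tassoc A B C) (tsum X (tsum Y Z))))
 \<and> (\<forall>(X :: (_, _, _, 'w) trisk) A A'. thom k X A A' \<longrightarrow>
      tiso (tcomp (tsum (tid {}) X) (tlunit A')) (tcomp (tlunit A) X)
    \<and> tiso (tcomp (tsum X (tid {})) (trunit A')) (tcomp (trunit A) X))
  \<comment> \<open>pentagon and triangle\<close>
 \<and> (\<forall>A B C D. card_of A <o k \<and> card_of B <o k \<and> card_of C <o k \<and> card_of D <o k \<longrightarrow>
      tiso (tcomp (tassoc (A <+> B) C D) (tassoc A B (C <+> D)) :: (_, _, _, 'w) trisk)
           (tcomp (tcomp (tsum (tassoc A B C) (tid D)) (tassoc A (B <+> C) D)) (tsum (tid A) (tassoc B C D))))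
 \<and> (\<forall>A B. card_of A <o k \<and> card_of B <o k \<longrightarrow>
      tiso (tcomp (tassoc A {} B) (tsum (tid A) (tlunit B)) :: (_, _, _, 'w) trisk)
           (tsum (trunit A) (tid B)))
  \<comment> \<open>symmetry: morphism, naturality, involutive, hexagon\<close>
 \<and> (\<forall>A B. card_of A <o k \<and> card_of B <o k \<longrightarrow>
      thom k (tswap A B :: (_, _, _, 'w) trisk) (A <+> B) (B <+> A)
    \<and> tiso (tcomp (tswap A B) (tswap B A) :: (_, _, _, 'w) trisk) (tid (A <+> B)))
 \<and> (\<forall>(X :: (_, _, _, 'w) trisk) (Y :: (_, _, _, 'w) trisk) A A' B B'. thom k X A A' \<and> thom k Y B B' \<longrightarrow>
      tiso (tcomp (tsum X Y) (tswap A' B')) (tcomp (tswap A B) (tsum Y X)))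
 \<and> (\<forall>A B C. card_of A <o k \<and> card_of B <o k \<and> card_of C <o k \<longrightarrow>
      tiso (tcomp (tcomp (tassoc A B C) (tswap A (B <+> C))) (tassoc B C A) :: (_, _, _, 'w) trisk)
           (tcomp (tcomp (tsum (tswap A B) (tid C)) (tassoc B A C)) (tsum (tid B) (tswap A C))))
  \<comment> \<open>trace: well defined on iso classes\<close>
 \<and> (\<forall>(F :: (_, _, _, 'w) trisk) A B U. thom k F (A <+> U) (B <+> U) \<longrightarrow> thom k (ttrace F) A B)
 \<and> (\<forall>(F :: (_, _, _, 'w) trisk) (F' :: (_, _, _, 'w) trisk) A B U.
      thom k F (A <+> U) (B <+> U) \<and> thom k F' (A <+> U) (B <+> U) \<and> tiso F F' \<longrightarrow>
      tiso (ttrace F) (ttrace F'))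
  \<comment> \<open>trace: naturality in the input and in the output\<close>
 \<and> (\<forall>(F :: (_, _, _, 'w) trisk) (G :: (_, _, _, 'w) trisk) A' A B U.
      thom k G A' A \<and> thom k F (A <+> U) (B <+> U) \<longrightarrow>
      tiso (ttrace (tcomp (tsum G (tid U)) F)) (tcomp G (ttrace F)))
 \<and> (\<forall>(F :: (_, _, _, 'w) trisk) (H :: (_, _, _, 'w) trisk) A B B' U.
      thom k F (A <+> U) (B <+> U) \<and> thom k H B B' \<longrightarrow>
      tiso (ttrace (tcomp F (tsum H (tid U)))) (tcomp (ttrace F) H))
  \<comment> \<open>trace: dinaturality (sliding)\<close>
 \<and> (\<forall>(F :: (_, _, _, 'w) trisk) (G :: (_, _, _, 'w) trisk) A B U U'.
      thom k F (A <+> U) (B <+> U') \<and> thom k G U' U \<longrightarrow>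
      tiso (ttrace (tcomp F (tsum (tid B) G))) (ttrace (tcomp (tsum (tid A) G) F)))
  \<comment> \<open>trace: vanishing (unit and product)\<close>
 \<and> (\<forall>(F :: (_, _, _, 'w) trisk) A B. thom k F (A <+> {}) (B <+> {}) \<longrightarrow>
      tiso (ttrace F) (tcomp (tcomp (trunit_inv A) F) (trunit B)))
 \<and> (\<forall>(F :: (_, _, _, 'w) trisk) A B U V. thom k F (A <+> (U <+> V)) (B <+> (U <+> V)) \<longrightarrow>
      tiso (ttrace F) (ttrace (ttrace (tcomp (tcomp (tassoc A U V) F) (tassoc_inv B U V)))))
  \<comment> \<open>trace: superposing\<close>
 \<and> (\<forall>(F :: (_, _, _, 'w) trisk) (G :: (_, _, _, 'w) trisk) A B U W Z.
      thom k G W Z \<and> thom k F (A <+> U) (B <+> U) \<longrightarrow>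
      tiso (ttrace (tcomp (tcomp (tassoc W A U) (tsum G F)) (tassoc_inv Z B U))) (tsum G (ttrace F)))
  \<comment> \<open>trace: yanking\<close>
 \<and> (\<forall>U. card_of U <o k \<longrightarrow> tiso (ttrace (tswap U U) :: (_, _, _, 'w) trisk) (tid U))"
proof -
  have k: "\<not> finite (Field k)" "Card_order k"
    using infinite_Field_if_natLeq_ordLess[OF kappa_card kappa_uncountable] kappa_card by blast+
  show ?thesis
    by (intro conjI allI impI; (elim conjE)?;
        (rule thom_tid thom_tcomp[OF k] thom_tsum[OF k] thom_ttrace[OF kappa_card kappa_uncountable]
          tassoc_isomorphism[OF k] tunitors_isomorphism tswap_symmetry[OF k]
          tcomp_cong tsum_cong ttrace_cong tcomp_tid_left tcomp_tid_right tcomp_assoc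
          tsum_tcomp_interchange tsum_tid tassoc_natural tunitors_natural tswap_natural
          tassoc_pentagon tassoc_triangle tswap_hexagon
          ttrace_natural_left ttrace_natural_right ttrace_dinatural ttrace_vanishing_unit
          ttrace_vanishing_tsum ttrace_superposing ttrace_yanking; assumption))
qed

end
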